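(* Let $A=(a_{ij})\in\mathbb{Q}^{m\times m}$ be Hermitian with (real) eigenvalues $\lambda_1,\ldots,\lambda_m$. Let $r_1=\sum_{i}\lambda_i$, $r_2=\sum_{i<j}\lambda_i\lambda_j$, $\ldots$, $r_m=\lambda_1\cdots\lambda_m$ be the elementary symmetric functions of the eigenvalues, and let $\mathrm{tr}_k(A)=\sum_{1\le i_1<\cdots<i_k\le m}|A_{i_1,\ldots,i_k}|$, where $A_{i_1,\ldots,i_k}$ is the $k\times k$ principal submatrix of $A$ formed by the rows and columns $i_1,\ldots,i_k$. Then $r_j=\mathrm{tr}_j(A)$ for $j=1,\ldots,m$.
   Context: $\mathbb{Q}$ is the real quaternion algebra and $A^H$ the quaternion conjugate transpose; $A$ is Hermitian if $A^H=A$. For a Hermitian quaternion matrix $B$, $|B|$ denotes its determinant in the sense of Zhang's theory of quaternion matrices (for Hermitian $B$ this is a real number, equal to the product of the eigenvalues of $B$); principal submatrices of a Hermitian matrix are Hermitian. *)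

theory Defs
  imports Complex_Main
begin

datatype quat = Quat (Re: real) (Im1: real) (Im2: real) (Im3: real)

instantiation quat :: ring_1
begin
definition "0 = Quat 0 0 0 0"
definition "1 = Quat 1 0 0 0"
definition "x + y = Quat (Re x + Re y) (Im1 x + Im1 y) (Im2 x + Im2 y) (Im3 x + Im3 y)"
definition "x - y = Quat (Re x - Re y) (Im1 x - Im1 y) (Im2 x - Im2 y) (Im3 x - Im3 y)"
definition "- x = Quat (- Re x) (- Im1 x) (- Im2 x) (- Im3 x)"
definition "x * y = Quat
   (Re x * Re y - Im1 x * Im1 y - Im2 x * Im2 y - Im3 x * Im3 y)
   (Re x * Im1 y + Im1 x * Re y + Im2 x * Im3 y - Im3 x * Im2 y)
   (Re x * Im2 y - Im1 x * Im3 y + Im2 x * Re y + Im3 x * Im1 y)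
   (Re x * Im3 y + Im1 x * Im2 y - Im2 x * Im1 y + Im3 x * Re y)"
instance
  by standard (auto simp: zero_quat_def one_quat_def plus_quat_def minus_quat_def
      uminus_quat_def times_quat_def algebra_simps intro: quat.expand)
end

definition qcnj :: "quat \<Rightarrow> quat" where
  "qcnj x = Quat (Re x) (- Im1 x) (- Im2 x) (- Im3 x)"

definition qreal :: "real \<Rightarrow> quat" where
  "qreal r = Quat r 0 0 0"

type_synonym qmat = "nat \<Rightarrow> nat \<Rightarrow> quat"

definition qmat_mult :: "nat \<Rightarrow> qmat \<Rightarrow> qmat \<Rightarrow> qmat" where
  "qmat_mult m A B = (\<lambda>i j. \<Sum>k<m. A i k * B k j)"

definition qmat_H :: "qmat \<Rightarrow> qmat" where
  "qmat_H A = (\<lambda>i j. qcnj (A j i))"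

definition hermitian :: "nat \<Rightarrow> qmat \<Rightarrow> bool" where
  "hermitian m A \<longleftrightarrow> (\<forall>i<m. \<forall>j<m. qmat_H A i j = A i j)"

definition unitary :: "nat \<Rightarrow> qmat \<Rightarrow> bool" where
  "unitary m U \<longleftrightarrow> (\<forall>i<m. \<forall>j<m. qmat_mult m (qmat_H U) U i j = (if i = j then 1 else 0))"

text \<open>lam 0, ..., lam (m-1) are the (real) eigenvalues of the Hermitian matrix A,
  counted with multiplicity: A is unitarily similar to the real diagonal matrix with
  these entries (spectral theorem for Hermitian quaternion matrices).\<close>
definition herm_eigenvalues :: "nat \<Rightarrow> qmat \<Rightarrow> (nat \<Rightarrow> real) \<Rightarrow> bool" where
  "herm_eigenvalues m A lam \<longleftrightarrow> hermitian m A \<and>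
     (\<exists>U. unitary m U \<and>
        (\<forall>i<m. \<forall>j<m. qmat_mult m (qmat_H U) (qmat_mult m A U) i j
                       = (if i = j then qreal (lam i) else 0)))"

definition herm_det :: "nat \<Rightarrow> qmat \<Rightarrow> real" where
  "herm_det m B = (THE d. \<exists>lam. herm_eigenvalues m B lam \<and> d = (\<Prod>i<m. lam i))"

definition principal_sub :: "qmat \<Rightarrow> nat set \<Rightarrow> qmat" where
  "principal_sub A S = (\<lambda>i j. A (sorted_list_of_set S ! i) (sorted_list_of_set S ! j))"

end

theory Submission
  imports Defs "HOL-Computational_Algebra.Polynomial" "Jordan_Normal_Form.Spectral_Radius"
begin

text \<open>For a Hermitian \<open>A\<close> with eigenvalues \<open>\<lambda>\<close>, the trace of the resolvent \<open>(xI - A)\<^sup>-\<^sup>1\<close> is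
  the logarithmic derivative \<open>p'/p\<close> of \<open>p = \<Prod>\<^sub>i (x - \<lambda>\<^sub>i)\<close>. Its \<open>k\<close>-th diagonal entry,
  computed after conjugating \<open>A\<close> into arrow form relative to an eigenbasis of the submatrix
  \<open>A\<^sub>k\<close> obtained by deleting row and column \<open>k\<close>, is \<open>p\<^sub>k/p\<close> with \<open>p\<^sub>k\<close> the characteristic
  polynomial of \<open>A\<^sub>k\<close>. Hence \<open>p' = \<Sum>\<^sub>k p\<^sub>k\<close>; comparing coefficients gives
  \<open>(m - j) r\<^sub>j(A) = \<Sum>\<^sub>k r\<^sub>j(A\<^sub>k)\<close>, and the identity \<open>r\<^sub>j = tr\<^sub>j\<close> follows by induction on \<open>m\<close>,
  since each \<open>j \<times> j\<close> principal submatrix of \<open>A\<close> is one of exactly \<open>m - j\<close> of the \<open>A\<^sub>k\<close>.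
  The spectral theorem, needed for the submatrices, is obtained from a real eigenvector of the
  real \<open>4m \<times> 4m\<close> representation and a Householder reflection.\<close>

lemma quat_eq_iff:
  "x = y \<longleftrightarrow> quat.Re x = quat.Re y \<and> Im1 x = Im1 y \<and> Im2 x = Im2 y \<and> Im3 x = Im3 y"
  by (cases x; cases y) auto

lemma quat_component_simps [simp]:
  "quat.Re 0 = 0" "Im1 0 = 0" "Im2 0 = 0" "Im3 0 = 0"
  "quat.Re 1 = 1" "Im1 1 = 0" "Im2 1 = 0" "Im3 1 = 0"
  "quat.Re (x + y) = quat.Re x + quat.Re y" "Im1 (x + y) = Im1 x + Im1 y"
  "Im2 (x + y) = Im2 x + Im2 y" "Im3 (x + y) = Im3 x + Im3 y"
  "quat.Re (x - y) = quat.Re x - quat.Re y" "Im1 (x - y) = Im1 x - Im1 y"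
  "Im2 (x - y) = Im2 x - Im2 y" "Im3 (x - y) = Im3 x - Im3 y"
  "quat.Re (- x) = - quat.Re x" "Im1 (- x) = - Im1 x"
  "Im2 (- x) = - Im2 x" "Im3 (- x) = - Im3 x"
  "quat.Re (x * y) = quat.Re x * quat.Re y - Im1 x * Im1 y - Im2 x * Im2 y - Im3 x * Im3 y"
  "Im1 (x * y) = quat.Re x * Im1 y + Im1 x * quat.Re y + Im2 x * Im3 y - Im3 x * Im2 y"
  "Im2 (x * y) = quat.Re x * Im2 y - Im1 x * Im3 y + Im2 x * quat.Re y + Im3 x * Im1 y"
  "Im3 (x * y) = quat.Re x * Im3 y + Im1 x * Im2 y - Im2 x * Im1 y + Im3 x * quat.Re y"
  "quat.Re (qcnj x) = quat.Re x" "Im1 (qcnj x) = - Im1 x" "Im2 (qcnj x) = - Im2 x" "Im3 (qcnj x) = - Im3 x"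
  "quat.Re (qreal r) = r" "Im1 (qreal r) = 0" "Im2 (qreal r) = 0" "Im3 (qreal r) = 0"
  by (simp_all add: zero_quat_def one_quat_def plus_quat_def minus_quat_def uminus_quat_def
      times_quat_def qcnj_def qreal_def)

lemma quat_component_sum [simp]:
  "quat.Re (sum f A) = (\<Sum>a\<in>A. quat.Re (f a))"
  "Im1 (sum f A) = (\<Sum>a\<in>A. Im1 (f a))"
  "Im2 (sum f A) = (\<Sum>a\<in>A. Im2 (f a))"
  "Im3 (sum f A) = (\<Sum>a\<in>A. Im3 (f a))"
  by (induction A rule: infinite_finite_induct; simp)+

lemma qcnj_mult: "qcnj (x * y) = qcnj y * qcnj x"
  by (simp add: quat_eq_iff algebra_simps)

lemma qcnj_diff [simp]: "qcnj (x - y) = qcnj x - qcnj y"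
  by (simp add: quat_eq_iff)

lemma qcnj_qcnj [simp]: "qcnj (qcnj x) = x"
  by (simp add: quat_eq_iff)

lemma qcnj_0 [simp]: "qcnj 0 = 0" and qcnj_1 [simp]: "qcnj 1 = 1"
  by (simp_all add: quat_eq_iff)

lemma qcnj_qreal [simp]: "qcnj (qreal r) = qreal r"
  by (simp add: quat_eq_iff)

lemma qcnj_sum: "qcnj (sum f A) = (\<Sum>a\<in>A. qcnj (f a))"
  by (simp add: quat_eq_iff sum_negf)

lemma qreal_commute: "qreal r * x = x * qreal r"
  by (simp add: quat_eq_iff)

lemma qreal_0 [simp]: "qreal 0 = 0" and qreal_1 [simp]: "qreal 1 = 1"
  by (simp_all add: quat_eq_iff)

lemma qreal_sum: "qreal (sum f A) = (\<Sum>a\<in>A. qreal (f a))"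
  by (simp add: quat_eq_iff)

lemma qreal_arith:
  "qreal a * qreal b = qreal (a * b)"
  "qreal a + qreal b = qreal (a + b)"
  "qreal a - qreal b = qreal (a - b)"
  "- qreal a = qreal (- a)"
  "qreal a * (qreal b * y) = qreal (a * b) * y"
  "qreal a * y + qreal b * y = qreal (a + b) * y"
  "qreal a * y - qreal b * y = qreal (a - b) * y"
  "- (qreal a * y) = qreal (- a) * y"
  by (simp_all add: quat_eq_iff algebra_simps)

lemma qreal_left_commute: "x * (qreal r * y) = qreal r * (x * y)"
  by (metis mult.assoc qreal_commute)

definition qnorm2 :: "quat \<Rightarrow> real" where
  "qnorm2 x = (quat.Re x)\<^sup>2 + (Im1 x)\<^sup>2 + (Im2 x)\<^sup>2 + (Im3 x)\<^sup>2"

lemma qnorm2_nonneg: "qnorm2 x \<ge> 0"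
  by (simp add: qnorm2_def)

lemma qnorm2_eq_0_iff: "qnorm2 x = 0 \<longleftrightarrow> x = 0"
  by (simp add: qnorm2_def quat_eq_iff add_nonneg_eq_0_iff)

lemma mult_qcnj_right: "x * qcnj x = qreal (qnorm2 x)"
  by (simp add: quat_eq_iff qnorm2_def power2_eq_square algebra_simps)

lemma mult_qcnj_left: "qcnj x * x = qreal (qnorm2 x)"
  by (simp add: quat_eq_iff qnorm2_def power2_eq_square algebra_simps)

lemma qnorm2_qreal_mult: "qnorm2 (qreal a * x) = a\<^sup>2 * qnorm2 x"
  by (simp add: qnorm2_def power2_eq_square algebra_simps)

lemma qnorm2_diff: "qnorm2 (x - y) = qnorm2 x + qnorm2 y - 2 * quat.Re (qcnj x * y)"
  by (simp add: qnorm2_def power2_eq_square algebra_simps)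


text \<open>A \<open>qmat\<close> stands for its upper left \<open>n \<times> n\<close> block; \<open>qmat_eq n\<close> is equality of
  these blocks, the entries outside being junk.\<close>

definition qmat_id :: qmat where
  "qmat_id = (\<lambda>i j. if i = j then 1 else 0)"

definition qmat_eq :: "nat \<Rightarrow> qmat \<Rightarrow> qmat \<Rightarrow> bool" where
  "qmat_eq n X Y \<longleftrightarrow> (\<forall>i<n. \<forall>j<n. X i j = Y i j)"

definition qmat_trace :: "nat \<Rightarrow> qmat \<Rightarrow> real" where
  "qmat_trace n X = (\<Sum>i<n. quat.Re (X i i))"

definition qmat_diag :: "(nat \<Rightarrow> real) \<Rightarrow> qmat" where
  "qmat_diag d = (\<lambda>i j. if i = j then qreal (d i) else 0)"

definition char_mat :: "real \<Rightarrow> qmat \<Rightarrow> qmat" where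
  "char_mat x B = (\<lambda>i j. (if i = j then qreal x else 0) - B i j)"

lemma qmat_mult_assoc: "qmat_mult n (qmat_mult n A B) C = qmat_mult n A (qmat_mult n B C)"
  unfolding qmat_mult_def
  by (auto simp: fun_eq_iff sum_distrib_left sum_distrib_right mult.assoc intro: sum.swap)

lemma qmat_H_mult: "qmat_H (qmat_mult n A B) = qmat_mult n (qmat_H B) (qmat_H A)"
  unfolding qmat_mult_def qmat_H_def by (auto simp: fun_eq_iff qcnj_sum qcnj_mult)

lemma qmat_H_H [simp]: "qmat_H (qmat_H A) = A"
  unfolding qmat_H_def by simp

lemma qmat_eq_sym: "qmat_eq n X Y \<Longrightarrow> qmat_eq n Y X"
  by (simp add: qmat_eq_def)

lemma qmat_eq_trans [trans]: "qmat_eq n X Y \<Longrightarrow> qmat_eq n Y Z \<Longrightarrow> qmat_eq n X Z"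
  by (simp add: qmat_eq_def)

lemma qmat_eq_eq_trans [trans]: "qmat_eq n X Y \<Longrightarrow> Y = Z \<Longrightarrow> qmat_eq n X Z"
  and eq_qmat_eq_trans [trans]: "X = Y \<Longrightarrow> qmat_eq n Y Z \<Longrightarrow> qmat_eq n X Z"
  by simp_all

lemma qmat_mult_eq_right: "qmat_eq n X Y \<Longrightarrow> j < n \<Longrightarrow> qmat_mult n A X i j = qmat_mult n A Y i j"
  unfolding qmat_eq_def qmat_mult_def by auto

lemma qmat_mult_eq_left: "qmat_eq n X Y \<Longrightarrow> i < n \<Longrightarrow> qmat_mult n X A i j = qmat_mult n Y A i j"
  unfolding qmat_eq_def qmat_mult_def by auto

lemma qmat_eq_mult_right: "qmat_eq n X Y \<Longrightarrow> qmat_eq n (qmat_mult n A X) (qmat_mult n A Y)"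
  using qmat_mult_eq_right unfolding qmat_eq_def by blast

lemma qmat_eq_mult_left: "qmat_eq n X Y \<Longrightarrow> qmat_eq n (qmat_mult n X A) (qmat_mult n Y A)"
  using qmat_mult_eq_left unfolding qmat_eq_def by blast

lemma qmat_eq_mult: "qmat_eq n X Y \<Longrightarrow> qmat_eq n X' Y' \<Longrightarrow> qmat_eq n (qmat_mult n X X') (qmat_mult n Y Y')"
  by (meson qmat_eq_mult_left qmat_eq_mult_right qmat_eq_trans)

lemma qmat_mult_scalar_left:
  assumes "i < n"
  shows "qmat_mult n (\<lambda>i j. if i = j then qreal x else 0) X i j = qreal x * X i j"
proof -
  have "qmat_mult n (\<lambda>i j. if i = j then qreal x else 0) X i j
      = (\<Sum>k<n. if k = i then qreal x * X k j else 0)"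
    unfolding qmat_mult_def by (rule sum.cong) auto
  then show ?thesis using assms by simp
qed

lemma qmat_mult_scalar_right:
  assumes "j < n"
  shows "qmat_mult n X (\<lambda>i j. if i = j then qreal x else 0) i j = qreal x * X i j"
proof -
  have "qmat_mult n X (\<lambda>i j. if i = j then qreal x else 0) i j
      = (\<Sum>k<n. if k = j then X i k * qreal x else 0)"
    unfolding qmat_mult_def by (rule sum.cong) auto
  then show ?thesis using assms by (simp add: qreal_commute)
qed

lemma qmat_id_mult [simp]: "i < n \<Longrightarrow> qmat_mult n qmat_id X i j = X i j"
  using qmat_mult_scalar_left[of i n 1 X, unfolded qreal_1] by (simp add: qmat_id_def)

lemma qmat_mult_id [simp]: "j < n \<Longrightarrow> qmat_mult n X qmat_id i j = X i j"
  using qmat_mult_scalar_right[of j n X 1, unfolded qreal_1] by (simp add: qmat_id_def)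

lemma qmat_id_mult_eq: "qmat_eq n (qmat_mult n qmat_id X) X"
  by (simp add: qmat_eq_def)

lemma qmat_mult_id_eq: "qmat_eq n (qmat_mult n X qmat_id) X"
  by (simp add: qmat_eq_def)

lemma qmat_mult_diff_left:
  "qmat_mult n (\<lambda>i j. X i j - Y i j) Z = (\<lambda>i j. qmat_mult n X Z i j - qmat_mult n Y Z i j)"
  unfolding qmat_mult_def by (auto simp: fun_eq_iff algebra_simps sum_subtractf)

lemma qmat_mult_diff_right:
  "qmat_mult n Z (\<lambda>i j. X i j - Y i j) = (\<lambda>i j. qmat_mult n Z X i j - qmat_mult n Z Y i j)"
  unfolding qmat_mult_def by (auto simp: fun_eq_iff algebra_simps sum_subtractf)

lemma qmat_trace_cong: "qmat_eq n X Y \<Longrightarrow> qmat_trace n X = qmat_trace n Y"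
  unfolding qmat_eq_def qmat_trace_def by auto

lemma qmat_trace_mult_commute: "qmat_trace n (qmat_mult n X Y) = qmat_trace n (qmat_mult n Y X)"
proof -
  have "quat.Re (a * b) = quat.Re (b * a)" for a b :: quat
    by simp
  then show ?thesis
    unfolding qmat_trace_def qmat_mult_def quat_component_sum
    by (subst sum.swap) (intro sum.cong refl)
qed

lemma qmat_trace_diff: "qmat_trace n (\<lambda>i j. X i j - Y i j) = qmat_trace n X - qmat_trace n Y"
  unfolding qmat_trace_def by (simp add: sum_subtractf)

lemma qmat_trace_id [simp]: "qmat_trace n qmat_id = n"
  unfolding qmat_trace_def qmat_id_def by simp

lemma qmat_trace_diag: "qmat_trace n (qmat_diag d) = (\<Sum>i<n. d i)"
  unfolding qmat_trace_def qmat_diag_def by simp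

lemma qmat_trace_H_mult_self_eq_0:
  assumes "qmat_trace n (qmat_mult n (qmat_H X) X) = 0"
  shows "\<forall>i<n. \<forall>k<n. X k i = 0"
proof -
  have "qmat_trace n (qmat_mult n (qmat_H X) X) = (\<Sum>i<n. \<Sum>k<n. qnorm2 (X k i))"
    unfolding qmat_trace_def qmat_mult_def qmat_H_def
    by (simp add: mult_qcnj_left del: quat_component_simps) (simp only: quat_component_simps)
  with assms have "\<forall>i<n. \<forall>k<n. qnorm2 (X k i) = 0"
    by (simp add: sum_nonneg_eq_0_iff qnorm2_nonneg sum_nonneg)
  then show ?thesis by (simp add: qnorm2_eq_0_iff)
qed

lemma hermitian_entry: "hermitian m A \<Longrightarrow> p < m \<Longrightarrow> q < m \<Longrightarrow> qcnj (A p q) = A q p"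
  unfolding hermitian_def qmat_H_def by auto

lemma hermitian_diag: "hermitian m A \<Longrightarrow> p < m \<Longrightarrow> A p p = qreal (quat.Re (A p p))"
  using hermitian_entry[of m A p p] by (simp add: quat_eq_iff)

lemma hermitian_qmat_eq: "hermitian n B \<Longrightarrow> qmat_eq n (qmat_H B) B"
  unfolding hermitian_def qmat_eq_def by auto

lemma unitary_iff_qmat_eq: "unitary n U \<longleftrightarrow> qmat_eq n (qmat_mult n (qmat_H U) U) qmat_id"
  unfolding unitary_def qmat_eq_def qmat_id_def by (rule refl)

text \<open>Over the non-commutative quaternions a left inverse is still a right inverse:
  \<open>Q = I - U U\<^sup>H\<close> is a Hermitian idempotent of trace \<open>n - n = 0\<close>, so \<open>Q\<^sup>H Q\<close> has trace \<open>0\<close>.\<close>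

lemma unitary_mult_H:
  assumes "unitary n U"
  shows "qmat_eq n (qmat_mult n U (qmat_H U)) qmat_id"
proof -
  define P where "P = qmat_mult n U (qmat_H U)"
  have UU: "qmat_eq n (qmat_mult n (qmat_H U) U) qmat_id"
    using assms unfolding unitary_iff_qmat_eq .
  have PP: "qmat_eq n (qmat_mult n P P) P"
  proof -
    have "qmat_mult n P P = qmat_mult n U (qmat_mult n (qmat_mult n (qmat_H U) U) (qmat_H U))"
      unfolding P_def qmat_mult_assoc ..
    also have "qmat_eq n \<dots> (qmat_mult n U (qmat_mult n qmat_id (qmat_H U)))"
      by (intro qmat_eq_mult_right qmat_eq_mult_left UU)
    also have "qmat_eq n \<dots> P"
      unfolding P_def by (intro qmat_eq_mult_right qmat_id_mult_eq)
    finally show ?thesis .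
  qed
  define Q where "Q = (\<lambda>i j. qmat_id i j - P i j)"
  have HP: "qcnj (P j i) = P i j" for i j
    unfolding P_def qmat_mult_def qmat_H_def by (simp add: qcnj_sum qcnj_mult)
  have HQ: "qmat_H Q = Q"
    unfolding Q_def qmat_H_def by (auto simp: fun_eq_iff HP qmat_id_def)
  have "qmat_eq n (qmat_mult n Q Q) Q"
    unfolding qmat_eq_def Q_def qmat_mult_diff_left qmat_mult_diff_right
    using PP unfolding qmat_eq_def by simp
  then have "qmat_trace n (qmat_mult n (qmat_H Q) Q) = qmat_trace n Q"
    using HQ by (simp add: qmat_trace_cong)
  also have "\<dots> = n - qmat_trace n (qmat_mult n (qmat_H U) U)"
    unfolding Q_def qmat_trace_diff P_def qmat_trace_mult_commute[of n U] by simp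
  also have "\<dots> = 0"
    using qmat_trace_cong[OF UU] by simp
  finally have "qmat_trace n (qmat_mult n (qmat_H Q) Q) = 0" .
  from qmat_trace_H_mult_self_eq_0[OF this] show ?thesis
    unfolding qmat_eq_def Q_def P_def by auto
qed

section \<open>The resolvent of a Hermitian matrix\<close>

lemma qmat_diag_mult_left:
  assumes "i < n"
  shows "qmat_mult n (qmat_diag d) V i j = qreal (d i) * V i j"
proof -
  have "qmat_mult n (qmat_diag d) V i j = (\<Sum>l<n. if l = i then qreal (d i) * V l j else 0)"
    unfolding qmat_mult_def qmat_diag_def by (intro sum.cong refl) auto
  then show ?thesis using assms by simp
qed

lemma qmat_conj_diag_entry:
  "qmat_mult n U (qmat_mult n (qmat_diag d) V) i j = (\<Sum>k<n. U i k * qreal (d k) * V k j)"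
  unfolding qmat_mult_def[of n U] by (intro sum.cong refl) (simp add: qmat_diag_mult_left mult.assoc)

lemma unitary_conj_diag_mult:
  assumes U: "unitary n U"
  shows "qmat_eq n
     (qmat_mult n (qmat_mult n U (qmat_mult n (qmat_diag d1) (qmat_H U)))
                  (qmat_mult n U (qmat_mult n (qmat_diag d2) (qmat_H U))))
     (qmat_mult n U (qmat_mult n (qmat_diag (\<lambda>i. d1 i * d2 i)) (qmat_H U)))"
proof -
  have "qmat_mult n (qmat_mult n U (qmat_mult n (qmat_diag d1) (qmat_H U)))
                    (qmat_mult n U (qmat_mult n (qmat_diag d2) (qmat_H U)))
    = qmat_mult n U (qmat_mult n (qmat_diag d1)
        (qmat_mult n (qmat_mult n (qmat_H U) U) (qmat_mult n (qmat_diag d2) (qmat_H U))))"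
    by (simp add: qmat_mult_assoc)
  also have "qmat_eq n \<dots> (qmat_mult n U (qmat_mult n (qmat_diag d1)
        (qmat_mult n qmat_id (qmat_mult n (qmat_diag d2) (qmat_H U)))))"
    using U unfolding unitary_iff_qmat_eq by (intro qmat_eq_mult_right qmat_eq_mult_left)
  also have "qmat_eq n \<dots> (qmat_mult n U (qmat_mult n (qmat_mult n (qmat_diag d1) (qmat_diag d2)) (qmat_H U)))"
    by (simp add: qmat_mult_assoc qmat_eq_mult_right qmat_id_mult_eq)
  also have "qmat_eq n \<dots> (qmat_mult n U (qmat_mult n (qmat_diag (\<lambda>i. d1 i * d2 i)) (qmat_H U)))"
    by (intro qmat_eq_mult_right qmat_eq_mult_left)
       (auto simp: qmat_eq_def qmat_diag_mult_left, auto simp: qmat_diag_def qreal_arith)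
  finally show ?thesis .
qed

lemma unitary_conj_diag_trace:
  assumes U: "unitary n U"
  shows "qmat_trace n (qmat_mult n U (qmat_mult n (qmat_diag d) (qmat_H U))) = (\<Sum>i<n. d i)"
proof -
  have "qmat_trace n (qmat_mult n U (qmat_mult n (qmat_diag d) (qmat_H U)))
      = qmat_trace n (qmat_mult n (qmat_diag d) (qmat_mult n (qmat_H U) U))"
    by (simp add: qmat_trace_mult_commute[of n U] qmat_mult_assoc)
  also have "\<dots> = qmat_trace n (qmat_diag d)"
    using U unfolding unitary_iff_qmat_eq
    by (meson qmat_eq_mult_right qmat_eq_trans qmat_mult_id_eq qmat_trace_cong)
  finally show ?thesis by (simp add: qmat_trace_diag)
qed

lemma herm_eigenvalues_decomp:
  assumes "herm_eigenvalues n B lam"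
  obtains U where "unitary n U" "qmat_eq n B (qmat_mult n U (qmat_mult n (qmat_diag lam) (qmat_H U)))"
proof -
  from assms obtain U where U: "unitary n U" and D:
    "\<forall>i<n. \<forall>j<n. qmat_mult n (qmat_H U) (qmat_mult n B U) i j = (if i = j then qreal (lam i) else 0)"
    unfolding herm_eigenvalues_def by auto
  have D': "qmat_eq n (qmat_diag lam) (qmat_mult n (qmat_H U) (qmat_mult n B U))"
    using D unfolding qmat_eq_def qmat_diag_def by auto
  have "qmat_eq n (qmat_mult n U (qmat_mult n (qmat_diag lam) (qmat_H U)))
      (qmat_mult n U (qmat_mult n (qmat_mult n (qmat_H U) (qmat_mult n B U)) (qmat_H U)))"
    by (intro qmat_eq_mult_right qmat_eq_mult_left D')
  also have "\<dots> = qmat_mult n (qmat_mult n U (qmat_H U)) (qmat_mult n B (qmat_mult n U (qmat_H U)))"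
    by (simp add: qmat_mult_assoc)
  also have "qmat_eq n \<dots> (qmat_mult n qmat_id (qmat_mult n B qmat_id))"
    by (intro qmat_eq_mult qmat_eq_mult_right unitary_mult_H U)
  also have "qmat_eq n \<dots> B"
    by (simp add: qmat_eq_def)
  finally show ?thesis using that U qmat_eq_sym by blast
qed

lemma char_mat_conj_diag:
  assumes U: "unitary n U"
    and B: "qmat_eq n B (qmat_mult n U (qmat_mult n (qmat_diag lam) (qmat_H U)))"
  shows "qmat_eq n (char_mat x B) (qmat_mult n U (qmat_mult n (qmat_diag (\<lambda>i. x - lam i)) (qmat_H U)))"
  unfolding qmat_eq_def
proof (intro allI impI)
  fix i j assume ij: "i < n" "j < n"
  have "qmat_mult n U (qmat_mult n (qmat_diag (\<lambda>i. x - lam i)) (qmat_H U)) i j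
    = (\<Sum>k<n. qreal x * (U i k * qmat_H U k j)) - (\<Sum>k<n. U i k * qreal (lam k) * qmat_H U k j)"
    unfolding qmat_conj_diag_entry qreal_arith(3)[symmetric]
    by (simp add: algebra_simps sum_subtractf qreal_commute)
  also have "(\<Sum>k<n. qreal x * (U i k * qmat_H U k j)) = qreal x * qmat_mult n U (qmat_H U) i j"
    by (simp add: qmat_mult_def sum_distrib_left)
  also have "qreal x * qmat_mult n U (qmat_H U) i j = (if i = j then qreal x else 0)"
    using unitary_mult_H[OF U] ij by (simp add: qmat_eq_def qmat_id_def)
  also have "(\<Sum>k<n. U i k * qreal (lam k) * qmat_H U k j) = B i j"
    using B ij by (simp add: qmat_eq_def qmat_conj_diag_entry)
  finally show "char_mat x B i j = qmat_mult n U (qmat_mult n (qmat_diag (\<lambda>i. x - lam i)) (qmat_H U)) i j"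
    by (simp add: char_mat_def)
qed

lemma left_inverse_eq_right_inverse:
  assumes "qmat_eq n (qmat_mult n N R) qmat_id" "qmat_eq n (qmat_mult n L N) qmat_id"
  shows "qmat_eq n R L"
proof -
  have "qmat_eq n R (qmat_mult n qmat_id R)"
    by (rule qmat_eq_sym[OF qmat_id_mult_eq])
  also have "qmat_eq n \<dots> (qmat_mult n (qmat_mult n L N) R)"
    by (intro qmat_eq_mult_left qmat_eq_sym[OF assms(2)])
  also have "\<dots> = qmat_mult n L (qmat_mult n N R)"
    by (simp add: qmat_mult_assoc)
  also have "qmat_eq n \<dots> (qmat_mult n L qmat_id)"
    by (intro qmat_eq_mult_right assms(1))
  also have "qmat_eq n \<dots> L"
    by (rule qmat_mult_id_eq)
  finally show ?thesis .
qed

lemma char_mat_inverse: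
  assumes ev: "herm_eigenvalues n B lam" and x: "\<forall>i<n. x \<noteq> lam i"
  obtains R where "qmat_eq n (qmat_mult n (char_mat x B) R) qmat_id"
    and "qmat_eq n (qmat_mult n R (char_mat x B)) qmat_id"
    and "qmat_trace n R = (\<Sum>i<n. 1 / (x - lam i))"
proof -
  obtain U where U: "unitary n U"
    and B: "qmat_eq n B (qmat_mult n U (qmat_mult n (qmat_diag lam) (qmat_H U)))"
    using herm_eigenvalues_decomp[OF ev] by blast
  define C where "C = qmat_mult n U (qmat_mult n (qmat_diag (\<lambda>i. x - lam i)) (qmat_H U))"
  define R where "R = qmat_mult n U (qmat_mult n (qmat_diag (\<lambda>i. 1 / (x - lam i))) (qmat_H U))"
  have N: "qmat_eq n (char_mat x B) C"
    unfolding C_def by (rule char_mat_conj_diag[OF U B])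
  have UU: "qmat_eq n (qmat_mult n U (qmat_mult n (qmat_diag d) (qmat_H U))) qmat_id"
    if "\<forall>i<n. d i = 1" for d
  proof -
    have "qmat_eq n (qmat_mult n (qmat_diag d) (qmat_H U)) (qmat_H U)"
      using that by (simp add: qmat_eq_def qmat_diag_mult_left)
    then show ?thesis
      by (meson qmat_eq_mult_right qmat_eq_trans unitary_mult_H U)
  qed
  have "qmat_eq n (qmat_mult n (char_mat x B) R) (qmat_mult n C R)"
    by (rule qmat_eq_mult_left[OF N])
  also have "qmat_eq n \<dots> qmat_id"
    using unitary_conj_diag_mult[OF U, of "\<lambda>i. x - lam i" "\<lambda>i. 1 / (x - lam i)"] UU[of "\<lambda>i. (x - lam i) * (1 / (x - lam i))"] x
    unfolding C_def R_def by (simp add: qmat_eq_trans)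
  finally have right: "qmat_eq n (qmat_mult n (char_mat x B) R) qmat_id" .
  have "qmat_eq n (qmat_mult n R (char_mat x B)) (qmat_mult n R C)"
    by (rule qmat_eq_mult_right[OF N])
  also have "qmat_eq n \<dots> qmat_id"
    using unitary_conj_diag_mult[OF U, of "\<lambda>i. 1 / (x - lam i)" "\<lambda>i. x - lam i"] UU[of "\<lambda>i. 1 / (x - lam i) * (x - lam i)"] x
    unfolding C_def R_def by (simp add: qmat_eq_trans)
  finally have left: "qmat_eq n (qmat_mult n R (char_mat x B)) qmat_id" .
  show ?thesis
    using that[OF right left] unitary_conj_diag_trace[OF U] unfolding R_def by blast
qed

lemma char_mat_right_inverse_unique:
  assumes "herm_eigenvalues n B lam" "\<forall>i<n. x \<noteq> lam i"
    and "qmat_eq n (qmat_mult n (char_mat x B) R1) qmat_id"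
    and "qmat_eq n (qmat_mult n (char_mat x B) R2) qmat_id"
  shows "qmat_eq n R1 R2"
proof -
  obtain L where "qmat_eq n (qmat_mult n L (char_mat x B)) qmat_id"
    using char_mat_inverse[OF assms(1,2)] by metis
  then show ?thesis
    using left_inverse_eq_right_inverse assms(3,4) by (meson qmat_eq_sym qmat_eq_trans)
qed

lemma trace_char_mat_right_inverse:
  assumes "herm_eigenvalues n B lam" "\<forall>i<n. x \<noteq> lam i"
    and "qmat_eq n (qmat_mult n (char_mat x B) R) qmat_id"
  shows "qmat_trace n R = (\<Sum>i<n. 1 / (x - lam i))"
proof -
  obtain R' where "qmat_eq n (qmat_mult n (char_mat x B) R') qmat_id"
    and "qmat_trace n R' = (\<Sum>i<n. 1 / (x - lam i))"
    using char_mat_inverse[OF assms(1,2)] by metis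
  with char_mat_right_inverse_unique[OF assms] show ?thesis
    using qmat_trace_cong by metis
qed

section \<open>Characteristic polynomials and the determinant\<close>

definition roots_poly :: "(nat \<Rightarrow> real) \<Rightarrow> nat \<Rightarrow> real poly" where
  "roots_poly lam n = (\<Prod>i<n. [:- lam i, 1:])"

lemma poly_roots_poly: "poly (roots_poly lam n) x = (\<Prod>i<n. x - lam i)"
  by (simp add: roots_poly_def poly_prod)

lemma degree_roots_poly: "degree (roots_poly lam n) = n"
  unfolding roots_poly_def by (subst degree_prod_sum_eq) auto

lemma lead_coeff_roots_poly: "lead_coeff (roots_poly lam n) = 1"
  unfolding roots_poly_def lead_coeff_prod by simp

lemma prod_remove_eq_divide:
  fixes lam :: "nat \<Rightarrow> real"
  assumes "a < n" "x \<noteq> lam a"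
  shows "(\<Prod>i\<in>{..<n} - {a}. x - lam i) = (\<Prod>i<n. x - lam i) / (x - lam a)"
  using assms by (simp add: prod.remove)

lemma poly_pderiv_roots_poly:
  assumes x: "\<forall>i<n. x \<noteq> lam i"
  shows "poly (pderiv (roots_poly lam n)) x = poly (roots_poly lam n) x * (\<Sum>i<n. 1 / (x - lam i))"
proof -
  have "poly (pderiv (roots_poly lam n)) x = (\<Sum>a<n. \<Prod>i\<in>{..<n} - {a}. x - lam i)"
    unfolding roots_poly_def pderiv_prod by (simp add: poly_sum poly_prod pderiv_pCons)
  also have "\<dots> = (\<Sum>a<n. (\<Prod>i<n. x - lam i) * (1 / (x - lam a)))"
    using x by (intro sum.cong refl) (simp add: prod_remove_eq_divide)
  finally show ?thesis by (simp add: poly_roots_poly sum_distrib_left)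
qed

lemma eventually_gt_all_at_top:
  fixes n :: nat
  shows "eventually (\<lambda>x::real. \<forall>i<n. f i < x) at_top"
proof -
  have "eventually (\<lambda>x. \<forall>i\<in>{..<n}. f i < x) at_top"
    by (intro eventually_ball_finite) (auto intro: eventually_gt_at_top)
  then show ?thesis
    by (rule eventually_mono) auto
qed

lemma poly_eqI_eventually_at_top:
  fixes p q :: "real poly"
  assumes "eventually (\<lambda>x. poly p x = poly q x) at_top"
  shows "p = q"
proof (rule ccontr)
  assume "p \<noteq> q"
  then have fin: "finite {x. poly (p - q) x = 0}"
    by (intro poly_roots_finite) simp
  from assms obtain X where "\<And>x. x \<ge> X \<Longrightarrow> poly p x = poly q x"
    unfolding eventually_at_top_linorder by blast
  then have "{X..X+1} \<subseteq> {x. poly (p - q) x = 0}"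
    by auto
  moreover have "infinite {X..X+1}"
    by (rule infinite_Icc) simp
  ultimately show False
    using fin finite_subset by blast
qed

lemma coeff_pderiv_mult_top:
  fixes p q :: "real poly"
  shows "coeff (pderiv p * q) (degree p - 1 + degree q) = of_nat (degree p) * lead_coeff p * lead_coeff q"
proof (cases "degree p = 0")
  case False
  then have "degree (pderiv p) = degree p - 1"
    by (simp add: degree_pderiv)
  then have "coeff (pderiv p * q) (degree p - 1 + degree q) = coeff (pderiv p) (degree p - 1) * lead_coeff q"
    using coeff_mult_degree_sum[of "pderiv p" q] by simp
  then show ?thesis
    using False by (simp add: coeff_pderiv)
next
  case True
  then have "pderiv p = 0"
    by (simp add: pderiv_eq_0_iff)
  then show ?thesis
    using True by simp
qed

text \<open>A monic polynomial is determined by its degree and its logarithmic derivative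
  \<open>p'/p\<close>: if \<open>p' q = q' p\<close>, the top coefficients of \<open>(p - q)' q = q' (p - q)\<close> give
  \<open>deg (p - q) = deg q\<close>, which is impossible.\<close>

lemma monic_poly_eq_if_pderiv_cross_eq:
  fixes p q :: "real poly"
  assumes deg: "degree p = n" "degree q = n" and lc: "lead_coeff p = 1" "lead_coeff q = 1"
    and eq: "pderiv p * q = pderiv q * p"
  shows "p = q"
proof (rule ccontr)
  assume ne: "p \<noteq> q"
  define d where "d = p - q"
  define k where "k = degree d"
  have d0: "d \<noteq> 0"
    using ne by (simp add: d_def)
  have "degree d \<le> n" "coeff d n = 0"
    using deg lc by (simp_all add: d_def degree_diff_le)
  with d0 have kn: "k < n"
    unfolding k_def by (metis le_neq_implies_less leading_coeff_0_iff)
  have deq: "pderiv d * q = pderiv q * d"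
    using eq by (simp add: d_def pderiv_diff algebra_simps)
  have "coeff (pderiv d * q) (n - 1 + k) = of_nat k * lead_coeff d"
  proof (cases "k = 0")
    case True
    then have "pderiv d = 0"
      by (simp add: k_def pderiv_eq_0_iff)
    then show ?thesis
      using True by simp
  next
    case False
    then show ?thesis
      using coeff_pderiv_mult_top[of d q] deg lc kn by (simp add: k_def add.commute)
  qed
  moreover have "coeff (pderiv q * d) (n - 1 + k) = of_nat n * lead_coeff d"
    using coeff_pderiv_mult_top[of q d] deg lc by (simp add: k_def)
  ultimately have "of_nat n * lead_coeff d = of_nat k * lead_coeff d"
    using deq by metis
  with d0 kn show False
    by simp
qed

lemma roots_poly_eqI_eventually:
  assumes "eventually (\<lambda>x. (\<Sum>i<n. 1 / (x - lam i)) = (\<Sum>i<n. 1 / (x - mu i))) at_top"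
  shows "roots_poly lam n = roots_poly mu n"
proof (rule monic_poly_eq_if_pderiv_cross_eq[OF degree_roots_poly degree_roots_poly
      lead_coeff_roots_poly lead_coeff_roots_poly])
  show "pderiv (roots_poly lam n) * roots_poly mu n = pderiv (roots_poly mu n) * roots_poly lam n"
  proof (rule poly_eqI_eventually_at_top)
    show "eventually (\<lambda>x. poly (pderiv (roots_poly lam n) * roots_poly mu n) x =
                          poly (pderiv (roots_poly mu n) * roots_poly lam n) x) at_top"
      using eventually_gt_all_at_top[of n lam] eventually_gt_all_at_top[of n mu] assms
    proof eventually_elim
      case (elim x)
      then have "\<forall>i<n. x \<noteq> lam i" "\<forall>i<n. x \<noteq> mu i"
        by force+
      with elim show ?case by (simp add: poly_pderiv_roots_poly)
    qed
  qed
qed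

lemma prod_eq_if_roots_poly_eq:
  assumes "roots_poly lam n = roots_poly mu n"
  shows "(\<Prod>i<n. lam i) = (\<Prod>i<n. mu i)"
proof -
  have "poly (roots_poly lam n) 0 = poly (roots_poly mu n) 0"
    using assms by simp
  then have "(-1) ^ n * (\<Prod>i<n. lam i) = (-1) ^ n * (\<Prod>i<n. mu i)"
    by (simp add: poly_roots_poly prod_uminus)
  then show ?thesis by simp
qed

text \<open>The eigenvalues are unique up to order since the trace of the resolvent,
  \<open>\<Sum>\<^sub>i 1 / (x - \<lambda>\<^sub>i)\<close>, depends on the matrix alone.\<close>

lemma herm_eigenvalues_roots_poly_eq:
  assumes ev1: "herm_eigenvalues n B lam" and ev2: "herm_eigenvalues n B mu"
  shows "roots_poly lam n = roots_poly mu n"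
proof (rule roots_poly_eqI_eventually)
  show "eventually (\<lambda>x. (\<Sum>i<n. 1 / (x - lam i)) = (\<Sum>i<n. 1 / (x - mu i))) at_top"
    using eventually_gt_all_at_top[of n lam] eventually_gt_all_at_top[of n mu]
  proof eventually_elim
    case (elim x)
    then have x1: "\<forall>i<n. x \<noteq> lam i" and x2: "\<forall>i<n. x \<noteq> mu i"
      by force+
    obtain R where R: "qmat_eq n (qmat_mult n (char_mat x B) R) qmat_id"
      using char_mat_inverse[OF ev1 x1] by metis
    show ?case
      using trace_char_mat_right_inverse[OF ev1 x1 R] trace_char_mat_right_inverse[OF ev2 x2 R]
      by simp
  qed
qed

lemma herm_det_eq:
  assumes "herm_eigenvalues n B lam"
  shows "herm_det n B = (\<Prod>i<n. lam i)"
  unfolding herm_det_def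
proof (rule the_equality)
  show "\<exists>mu. herm_eigenvalues n B mu \<and> (\<Prod>i<n. lam i) = (\<Prod>i<n. mu i)"
    using assms by blast
  fix d assume "\<exists>mu. herm_eigenvalues n B mu \<and> d = (\<Prod>i<n. mu i)"
  then show "d = (\<Prod>i<n. lam i)"
    using herm_eigenvalues_roots_poly_eq[OF assms] prod_eq_if_roots_poly_eq by metis
qed

lemma herm_eigenvalues_cong:
  assumes "qmat_eq n B B'"
  shows "herm_eigenvalues n B lam = herm_eigenvalues n B' lam"
proof -
  have "hermitian n B = hermitian n B'"
    using assms unfolding hermitian_def qmat_eq_def qmat_H_def by auto
  moreover have "qmat_mult n (qmat_H U) (qmat_mult n B U) i j = qmat_mult n (qmat_H U) (qmat_mult n B' U) i j"
    if "i < n" "j < n" for U i j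
    using that qmat_eq_mult_right[OF qmat_eq_mult_left[OF assms]] unfolding qmat_eq_def by blast
  ultimately show ?thesis
    unfolding herm_eigenvalues_def by simp
qed

lemma herm_det_cong: "qmat_eq n B B' \<Longrightarrow> herm_det n B = herm_det n B'"
  unfolding herm_det_def by (simp add: herm_eigenvalues_cong)

definition skip :: "nat \<Rightarrow> nat \<Rightarrow> nat" where
  "skip k a = (if a < k then a else Suc a)"

definition unskip :: "nat \<Rightarrow> nat \<Rightarrow> nat" where
  "unskip k p = (if p < k then p else p - 1)"

definition qmat_del :: "nat \<Rightarrow> qmat \<Rightarrow> qmat" where
  "qmat_del k A = (\<lambda>a b. A (skip k a) (skip k b))"

lemma skip_neq [simp]: "skip k a \<noteq> k" "k \<noteq> skip k a"
  by (simp_all add: skip_def)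

lemma skip_inject [simp]: "skip k a = skip k b \<longleftrightarrow> a = b"
  by (simp add: skip_def)

lemma skip_unskip: "p \<noteq> k \<Longrightarrow> skip k (unskip k p) = p"
  by (auto simp: skip_def unskip_def)

lemma skip_less: "k < m \<Longrightarrow> a < m - 1 \<Longrightarrow> skip k a < m"
  by (auto simp: skip_def)

lemma unskip_less: "p < m \<Longrightarrow> p \<noteq> k \<Longrightarrow> k < m \<Longrightarrow> unskip k p < m - 1"
  by (auto simp: unskip_def)

lemma strict_mono_skip: "strict_mono (skip k)"
  by (simp add: strict_mono_def skip_def)

lemma skip_image_lessThan:
  assumes "k < m"
  shows "skip k ` {..<m - 1} = {..<m} - {k}"
proof
  show "skip k ` {..<m - 1} \<subseteq> {..<m} - {k}"
    using assms by (auto simp: skip_less)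
  show "{..<m} - {k} \<subseteq> skip k ` {..<m - 1}"
  proof
    fix p assume "p \<in> {..<m} - {k}"
    then have "p = skip k (unskip k p)" "unskip k p < m - 1"
      using assms skip_unskip unskip_less by auto
    then show "p \<in> skip k ` {..<m - 1}" by blast
  qed
qed

lemma sum_lessThan_skip:
  assumes "k < m"
  shows "(\<Sum>q<m. g q) = g k + (\<Sum>a<m - 1. g (skip k a))"
proof -
  have "(\<Sum>q<m. g q) = g k + (\<Sum>q\<in>{..<m} - {k}. g q)"
    using assms by (simp add: sum.remove)
  also have "(\<Sum>q\<in>{..<m} - {k}. g q) = (\<Sum>a<m - 1. g (skip k a))"
    unfolding skip_image_lessThan[OF assms, symmetric]
    by (rule sum.reindex_cong[OF _ refl refl]) (simp add: inj_on_def)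
  finally show ?thesis .
qed

lemma index_cases_skip:
  assumes "p < m" "k < m"
  obtains "p = k" | a where "a < m - 1" "p = skip k a"
  using assms skip_unskip unskip_less by metis

lemma hermitian_qmat_del: "hermitian m A \<Longrightarrow> k < m \<Longrightarrow> hermitian (m - 1) (qmat_del k A)"
  unfolding hermitian_def qmat_H_def qmat_del_def by (auto simp: skip_less)

definition qmat_extend_at :: "nat \<Rightarrow> qmat \<Rightarrow> qmat" where
  "qmat_extend_at k V p q =
     (if p = k then (if q = k then 1 else 0) else if q = k then 0 else V (unskip k p) (unskip k q))"

lemma qmat_extend_at_simps [simp]:
  "qmat_extend_at k V k k = 1" "qmat_extend_at k V k (skip k b) = 0"
  "qmat_extend_at k V (skip k a) k = 0" "qmat_extend_at k V (skip k a) (skip k b) = V a b"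
  by (simp_all add: qmat_extend_at_def unskip_def skip_def)

lemma unitary_qmat_extend_at:
  assumes k: "k < m" and V: "unitary (m - 1) V"
  shows "unitary m (qmat_extend_at k V)"
  unfolding unitary_def
proof (intro allI impI)
  fix p q assume p: "p < m" and q: "q < m"
  let ?W = "qmat_extend_at k V"
  have e: "qmat_mult m (qmat_H ?W) ?W p q =
      qcnj (?W k p) * ?W k q + (\<Sum>a<m - 1. qcnj (?W (skip k a) p) * ?W (skip k a) q)" for p q
    unfolding qmat_mult_def qmat_H_def by (rule sum_lessThan_skip[OF k])
  show "qmat_mult m (qmat_H ?W) ?W p q = (if p = q then 1 else 0)"
  proof (cases rule: index_cases_skip[OF p k])
    case 1
    then show ?thesis by (cases rule: index_cases_skip[OF q k]) (auto simp: e)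
  next
    case (2 a)
    then show ?thesis
    proof (cases rule: index_cases_skip[OF q k])
      case 1
      then show ?thesis using 2 by (auto simp: e)
    next
      case (2 b)
      then have "qmat_mult m (qmat_H ?W) ?W p q = qmat_mult (m - 1) (qmat_H V) V a b"
        using \<open>p = skip k a\<close> unfolding e by (simp add: qmat_mult_def qmat_H_def)
      also have "\<dots> = (if a = b then 1 else 0)"
        using V \<open>a < m - 1\<close> 2 unfolding unitary_def by auto
      finally show ?thesis using 2 \<open>p = skip k a\<close> by simp
    qed
  qed
qed

text \<open>Conjugating by \<open>qmat_extend_at k V\<close>, where \<open>V\<close> diagonalises the submatrix with row and
  column \<open>k\<close> deleted, brings a Hermitian matrix into arrow form.\<close>

lemma qmat_extend_at_conj:
  assumes k: "k < m" and hA: "hermitian m A"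
    and D: "qmat_eq (m - 1) (qmat_mult (m - 1) (qmat_H V) (qmat_mult (m - 1) (qmat_del k A) V)) (qmat_diag mu)"
  defines "B \<equiv> qmat_mult m (qmat_H (qmat_extend_at k V)) (qmat_mult m A (qmat_extend_at k V))"
    and "c \<equiv> (\<lambda>a. \<Sum>a'<m - 1. qcnj (V a' a) * A (skip k a') k)"
  shows "\<And>a b. a < m - 1 \<Longrightarrow> b < m - 1 \<Longrightarrow> B (skip k a) (skip k b) = (if a = b then qreal (mu a) else 0)"
    and "B k k = qreal (quat.Re (A k k))"
    and "\<And>a. B (skip k a) k = c a"
    and "\<And>b. b < m - 1 \<Longrightarrow> B k (skip k b) = qcnj (c b)"
proof -
  define W where "W = qmat_extend_at k V"
  have AW: "qmat_mult m A W r q = A r k * W k q + (\<Sum>b<m - 1. A r (skip k b) * W (skip k b) q)" for r q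
    unfolding qmat_mult_def by (rule sum_lessThan_skip[OF k])
  have AWk: "qmat_mult m A W r k = A r k" for r
    unfolding AW by (simp add: W_def)
  have AWb: "qmat_mult m A W r (skip k b) = (\<Sum>b'<m - 1. A r (skip k b') * V b' b)" for r b
    unfolding AW by (simp add: W_def)
  have B: "B p q = qcnj (W k p) * qmat_mult m A W k q
      + (\<Sum>a<m - 1. qcnj (W (skip k a) p) * qmat_mult m A W (skip k a) q)" for p q
    unfolding B_def W_def[symmetric] qmat_H_def qmat_mult_def[of m "\<lambda>i j. qcnj (W j i)"]
    by (rule sum_lessThan_skip[OF k])
  have Bk: "B k q = qmat_mult m A W k q" for q
    unfolding B by (simp add: W_def)
  have Ba: "B (skip k a) q = (\<Sum>a'<m - 1. qcnj (V a' a) * qmat_mult m A W (skip k a') q)" for a q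
    unfolding B by (simp add: W_def)
  show "B (skip k a) (skip k b) = (if a = b then qreal (mu a) else 0)" if "a < m - 1" "b < m - 1" for a b
  proof -
    have "B (skip k a) (skip k b) = qmat_mult (m - 1) (qmat_H V) (qmat_mult (m - 1) (qmat_del k A) V) a b"
      unfolding Ba AWb by (simp add: qmat_mult_def qmat_H_def qmat_del_def)
    then show ?thesis
      using D that by (simp add: qmat_eq_def qmat_diag_def)
  qed
  show "B k k = qreal (quat.Re (A k k))"
    unfolding Bk AWk using hermitian_diag[OF hA k] .
  show "B (skip k a) k = c a" for a
    unfolding Ba AWk c_def ..
  show "B k (skip k b) = qcnj (c b)" if "b < m - 1" for b
  proof -
    have "qcnj (c b) = (\<Sum>a'<m - 1. A k (skip k a') * V a' b)"
      unfolding c_def qcnj_sum qcnj_mult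
      by (intro sum.cong refl) (simp add: hermitian_entry[OF hA] skip_less[OF k] k)
    then show ?thesis
      unfolding Bk AWb by simp
  qed
qed


section \<open>Right inverses of \<open>xI - B\<close> for an arrow matrix \<open>B\<close>\<close>

definition schur :: "real \<Rightarrow> (nat \<Rightarrow> real) \<Rightarrow> (nat \<Rightarrow> real) \<Rightarrow> nat \<Rightarrow> real \<Rightarrow> real" where
  "schur al w mu n x = x - al - (\<Sum>a<n. w a / (x - mu a))"

lemma qcnj_mult_qreal_mult:
  "qcnj c * (qreal t * (d + c * r)) = qreal t * (qcnj c * d) + qreal (t * qnorm2 c) * r"
proof -
  have "qcnj c * (qreal t * (d + c * r)) = qreal t * (qcnj c * d) + qreal t * ((qcnj c * c) * r)"
    by (simp add: qreal_left_commute distrib_left mult.assoc)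
  then show ?thesis
    by (simp add: mult_qcnj_left qreal_arith)
qed

text \<open>Eliminating the rows other than \<open>k\<close> from \<open>(xI - B) R = I\<close> shows that \<open>R\<^sub>k\<^sub>k\<close> is the
  inverse of the Schur complement \<open>\<sigma>\<close>; the other diagonal entries of \<open>R\<close> follow.\<close>

locale arrow_right_inverse =
  fixes m k :: nat and B R :: qmat and al x :: real and mu :: "nat \<Rightarrow> real" and c :: "nat \<Rightarrow> quat"
  assumes k: "k < m"
    and diag: "\<And>a b. a < m - 1 \<Longrightarrow> b < m - 1 \<Longrightarrow>
      B (skip k a) (skip k b) = (if a = b then qreal (mu a) else 0)"
    and corner: "B k k = qreal al"
    and col: "\<And>a. a < m - 1 \<Longrightarrow> B (skip k a) k = c a"
    and row: "\<And>b. b < m - 1 \<Longrightarrow> B k (skip k b) = qcnj (c b)"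
    and x: "\<And>a. a < m - 1 \<Longrightarrow> x \<noteq> mu a"
    and inv: "qmat_eq m (qmat_mult m (char_mat x B) R) qmat_id"
begin

abbreviation "\<sigma> \<equiv> schur al (\<lambda>a. qnorm2 (c a)) mu (m - 1) x"

lemma inv_entry:
  assumes "p < m" "q < m"
  shows "qmat_id p q = char_mat x B p k * R k q + (\<Sum>a<m - 1. char_mat x B p (skip k a) * R (skip k a) q)"
  using inv assms unfolding qmat_eq_def qmat_mult_def sum_lessThan_skip[OF k] by simp

lemma lower_entry:
  assumes a: "a < m - 1" and q: "q < m"
  shows "R (skip k a) q = qreal (1 / (x - mu a)) * (qmat_id (skip k a) q + c a * R k q)"
proof -
  have "(\<Sum>b<m - 1. char_mat x B (skip k a) (skip k b) * R (skip k b) q)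
      = (\<Sum>b<m - 1. if a = b then qreal (x - mu a) * R (skip k b) q else 0)"
    using a by (intro sum.cong refl) (auto simp: char_mat_def diag qreal_arith)
  then have "qmat_id (skip k a) q = - c a * R k q + qreal (x - mu a) * R (skip k a) q"
    using inv_entry[OF skip_less[OF k a] q] a by (simp add: char_mat_def col)
  then have eq: "qreal (x - mu a) * R (skip k a) q = qmat_id (skip k a) q + c a * R k q"
    by (simp add: algebra_simps)
  have "R (skip k a) q = qreal (1 / (x - mu a)) * (qreal (x - mu a) * R (skip k a) q)"
    using x[OF a] by (simp add: qreal_arith)
  then show ?thesis
    unfolding eq .
qed

lemma top_entry:
  assumes q: "q < m"
  shows "qreal \<sigma> * R k q
    = qmat_id k q + (\<Sum>a<m - 1. qreal (1 / (x - mu a)) * (qcnj (c a) * qmat_id (skip k a) q))"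
proof -
  let ?S = "\<Sum>a<m - 1. qnorm2 (c a) / (x - mu a)"
  have "qmat_id k q = qreal (x - al) * R k q - (\<Sum>a<m - 1. qcnj (c a) * R (skip k a) q)"
    using inv_entry[OF k q] by (simp add: char_mat_def corner row sum_negf qreal_arith)
  also have "(\<Sum>a<m - 1. qcnj (c a) * R (skip k a) q)
      = (\<Sum>a<m - 1. qreal (1 / (x - mu a)) * (qcnj (c a) * qmat_id (skip k a) q)) + qreal ?S * R k q"
    by (simp add: lower_entry q qcnj_mult_qreal_mult sum.distrib qreal_sum sum_distrib_right)
  finally have I: "qmat_id k q = qreal (x - al) * R k q
      - ((\<Sum>a<m - 1. qreal (1 / (x - mu a)) * (qcnj (c a) * qmat_id (skip k a) q)) + qreal ?S * R k q)" .
  have "qreal \<sigma> * R k q = qreal (x - al) * R k q - qreal ?S * R k q"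
    unfolding schur_def by (simp only: qreal_arith(7))
  then show ?thesis
    unfolding I by (simp add: algebra_simps)
qed

lemma corner_entry: "\<sigma> \<noteq> 0" "R k k = qreal (1 / \<sigma>)"
proof -
  have e: "qreal \<sigma> * R k k = 1"
    using top_entry[OF k] by (simp add: qmat_id_def)
  then show "\<sigma> \<noteq> 0"
    by (auto simp: quat_eq_iff)
  then show "R k k = qreal (1 / \<sigma>)"
    using arg_cong[OF e, of "\<lambda>y. qreal (1 / \<sigma>) * y"] by (simp add: qreal_arith)
qed

lemma top_entry_skip:
  assumes b: "b < m - 1"
  shows "R k (skip k b) = qreal (1 / (\<sigma> * (x - mu b))) * qcnj (c b)"
proof -
  have "qreal \<sigma> * R k (skip k b) = qreal (1 / (x - mu b)) * qcnj (c b)"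
    using top_entry[OF skip_less[OF k b]] b by (simp add: qmat_id_def if_distrib cong: if_cong)
  then have "qreal (1 / \<sigma>) * (qreal \<sigma> * R k (skip k b)) = qreal (1 / (\<sigma> * (x - mu b))) * qcnj (c b)"
    by (simp add: qreal_arith)
  then show ?thesis
    using corner_entry(1) by (simp add: qreal_arith)
qed

lemma lower_diag_entry:
  assumes b: "b < m - 1"
  shows "quat.Re (R (skip k b) (skip k b)) = 1 / (x - mu b) + qnorm2 (c b) / ((x - mu b) * (x - mu b) * \<sigma>)"
proof -
  have "c b * R k (skip k b) = qreal (1 / (\<sigma> * (x - mu b))) * (c b * qcnj (c b))"
    unfolding top_entry_skip[OF b] by (rule qreal_left_commute)
  then have "R (skip k b) (skip k b) = qreal (1 / (x - mu b)) * (1 + qreal (qnorm2 (c b) / (\<sigma> * (x - mu b))))"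
    using lower_entry[OF b skip_less[OF k b]] by (simp add: qmat_id_def mult_qcnj_right qreal_arith)
  then show ?thesis
    by (simp add: field_simps)
qed

lemma trace_eq:
  "qmat_trace m R = 1 / \<sigma> + (\<Sum>a<m - 1. 1 / (x - mu a) + qnorm2 (c a) / ((x - mu a) * (x - mu a) * \<sigma>))"
  unfolding qmat_trace_def sum_lessThan_skip[OF k] by (simp add: corner_entry(2) lower_diag_entry)

end

lemma qmat_mult_qreal_left: "qmat_mult n (\<lambda>i j. qreal x * X i j) Y = (\<lambda>i j. qreal x * qmat_mult n X Y i j)"
  unfolding qmat_mult_def by (simp add: sum_distrib_left mult.assoc)

lemma qmat_mult_qreal_right: "qmat_mult n Y (\<lambda>i j. qreal x * X i j) = (\<lambda>i j. qreal x * qmat_mult n Y X i j)"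
  unfolding qmat_mult_def by (simp add: sum_distrib_left qreal_left_commute)

lemma char_mat_unitary_conj:
  assumes W: "unitary m W"
  shows "qmat_eq m (char_mat x (qmat_mult m (qmat_H W) (qmat_mult m A W)))
                   (qmat_mult m (qmat_H W) (qmat_mult m (char_mat x A) W))"
proof -
  have "char_mat x A = (\<lambda>i j. qreal x * qmat_id i j - A i j)"
    by (auto simp: fun_eq_iff char_mat_def qmat_id_def)
  then have "qmat_mult m (qmat_H W) (qmat_mult m (char_mat x A) W)
      = (\<lambda>i j. qreal x * qmat_mult m (qmat_H W) (qmat_mult m qmat_id W) i j
               - qmat_mult m (qmat_H W) (qmat_mult m A W) i j)"
    by (simp add: qmat_mult_diff_left qmat_mult_diff_right qmat_mult_qreal_left qmat_mult_qreal_right)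
  moreover have "qmat_eq m (qmat_mult m (qmat_H W) (qmat_mult m qmat_id W)) qmat_id"
    using W unfolding unitary_iff_qmat_eq
    by (meson qmat_eq_mult_right qmat_eq_trans qmat_id_mult_eq)
  ultimately show ?thesis
    by (auto simp: qmat_eq_def char_mat_def qmat_id_def)
qed

lemma right_inverse_unitary_conj:
  assumes W: "unitary m W" and R: "qmat_eq m (qmat_mult m (char_mat x A) R) qmat_id"
  shows "qmat_eq m (qmat_mult m (char_mat x (qmat_mult m (qmat_H W) (qmat_mult m A W)))
                              (qmat_mult m (qmat_H W) (qmat_mult m R W))) qmat_id"
proof -
  let ?N = "char_mat x A"
  have "qmat_eq m (qmat_mult m (char_mat x (qmat_mult m (qmat_H W) (qmat_mult m A W)))
                              (qmat_mult m (qmat_H W) (qmat_mult m R W)))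
      (qmat_mult m (qmat_mult m (qmat_H W) (qmat_mult m ?N W)) (qmat_mult m (qmat_H W) (qmat_mult m R W)))"
    by (intro qmat_eq_mult_left char_mat_unitary_conj W)
  also have "\<dots> = qmat_mult m (qmat_H W) (qmat_mult m ?N (qmat_mult m (qmat_mult m W (qmat_H W)) (qmat_mult m R W)))"
    by (simp add: qmat_mult_assoc)
  also have "qmat_eq m \<dots> (qmat_mult m (qmat_H W) (qmat_mult m ?N (qmat_mult m qmat_id (qmat_mult m R W))))"
    by (intro qmat_eq_mult_right qmat_eq_mult_left unitary_mult_H W)
  also have "qmat_eq m \<dots> (qmat_mult m (qmat_H W) (qmat_mult m (qmat_mult m ?N R) W))"
    by (simp add: qmat_mult_assoc qmat_eq_mult_right qmat_id_mult_eq)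
  also have "qmat_eq m \<dots> (qmat_mult m (qmat_H W) (qmat_mult m qmat_id W))"
    by (intro qmat_eq_mult_right qmat_eq_mult_left R)
  also have "qmat_eq m \<dots> qmat_id"
    using W unfolding unitary_iff_qmat_eq by (meson qmat_eq_mult_right qmat_eq_trans qmat_id_mult_eq)
  finally show ?thesis .
qed

lemma qmat_trace_unitary_conj:
  assumes "unitary m W"
  shows "qmat_trace m (qmat_mult m (qmat_H W) (qmat_mult m R W)) = qmat_trace m R"
proof -
  have "qmat_trace m (qmat_mult m (qmat_H W) (qmat_mult m R W)) = qmat_trace m (qmat_mult m R (qmat_mult m W (qmat_H W)))"
    by (simp add: qmat_trace_mult_commute[of m "qmat_H W"] qmat_mult_assoc)
  also have "\<dots> = qmat_trace m R"
    using unitary_mult_H[OF assms]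
    by (meson qmat_eq_mult_right qmat_eq_trans qmat_mult_id_eq qmat_trace_cong)
  finally show ?thesis .
qed

lemma qmat_extend_at_conj_corner:
  assumes k: "k < m"
  shows "qmat_mult m (qmat_H (qmat_extend_at k V)) (qmat_mult m R (qmat_extend_at k V)) k k = R k k"
proof -
  have "qmat_mult m (qmat_H (qmat_extend_at k V)) X k k = X k k" for X
    unfolding qmat_mult_def sum_lessThan_skip[OF k] by (simp add: qmat_H_def)
  moreover have "qmat_mult m R (qmat_extend_at k V) k k = R k k"
    unfolding qmat_mult_def sum_lessThan_skip[OF k] by simp
  ultimately show ?thesis by simp
qed

text \<open>Computed in the arrow form of \<open>A\<close> relative to the eigenbasis \<open>V\<close> of \<open>qmat_del k A\<close>.\<close>

lemma resolvent_corner_and_trace: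
  assumes hA: "hermitian m A" and k: "k < m" and V: "unitary (m - 1) V"
    and D: "qmat_eq (m - 1) (qmat_mult (m - 1) (qmat_H V) (qmat_mult (m - 1) (qmat_del k A) V)) (qmat_diag mu)"
    and x: "\<forall>a<m - 1. x \<noteq> mu a"
    and R: "qmat_eq m (qmat_mult m (char_mat x A) R) qmat_id"
  defines "w \<equiv> (\<lambda>a. qnorm2 (\<Sum>a'<m - 1. qcnj (V a' a) * A (skip k a') k))"
  shows "schur (quat.Re (A k k)) w mu (m - 1) x \<noteq> 0"
    and "R k k = qreal (1 / schur (quat.Re (A k k)) w mu (m - 1) x)"
    and "qmat_trace m R = 1 / schur (quat.Re (A k k)) w mu (m - 1) x
      + (\<Sum>a<m - 1. 1 / (x - mu a) + w a / ((x - mu a) * (x - mu a) * schur (quat.Re (A k k)) w mu (m - 1) x))"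
proof -
  define W where "W = qmat_extend_at k V"
  define c where "c = (\<lambda>a. \<Sum>a'<m - 1. qcnj (V a' a) * A (skip k a') k)"
  have w: "w = (\<lambda>a. qnorm2 (c a))"
    unfolding w_def c_def ..
  have W: "unitary m W"
    unfolding W_def by (rule unitary_qmat_extend_at[OF k V])
  interpret arrow_right_inverse m k "qmat_mult m (qmat_H W) (qmat_mult m A W)"
    "qmat_mult m (qmat_H W) (qmat_mult m R W)" "quat.Re (A k k)" x mu c
    using k x right_inverse_unitary_conj[OF W R] qmat_extend_at_conj[OF k hA D]
    unfolding W_def by unfold_locales (auto simp: c_def)
  show "schur (quat.Re (A k k)) w mu (m - 1) x \<noteq> 0"
    unfolding w by (rule corner_entry(1))
  show "R k k = qreal (1 / schur (quat.Re (A k k)) w mu (m - 1) x)"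
    using corner_entry(2) qmat_extend_at_conj_corner[OF k] unfolding W_def w by simp
  show "qmat_trace m R = 1 / schur (quat.Re (A k k)) w mu (m - 1) x
      + (\<Sum>a<m - 1. 1 / (x - mu a) + w a / ((x - mu a) * (x - mu a) * schur (quat.Re (A k k)) w mu (m - 1) x))"
    using trace_eq qmat_trace_unitary_conj[OF W] unfolding w by simp
qed

text \<open>The numerator polynomial of \<open>schur al w \<mu> n\<close>.\<close>

definition schur_poly :: "real \<Rightarrow> (nat \<Rightarrow> real) \<Rightarrow> (nat \<Rightarrow> real) \<Rightarrow> nat \<Rightarrow> real poly" where
  "schur_poly al w mu n = [:- al, 1:] * roots_poly mu n
     - (\<Sum>a<n. Polynomial.smult (w a) (\<Prod>b\<in>{..<n} - {a}. [:- mu b, 1:]))"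

lemma poly_schur_poly:
  assumes x: "\<forall>a<n. x \<noteq> mu a"
  shows "poly (schur_poly al w mu n) x = schur al w mu n x * poly (roots_poly mu n) x"
proof -
  have "poly (schur_poly al w mu n) x
      = (x - al) * poly (roots_poly mu n) x - (\<Sum>a<n. w a * (\<Prod>b\<in>{..<n} - {a}. x - mu b))"
    unfolding schur_poly_def by (simp add: poly_sum poly_prod left_diff_distrib)
  also have "(\<Sum>a<n. w a * (\<Prod>b\<in>{..<n} - {a}. x - mu b)) = (\<Sum>a<n. w a * (poly (roots_poly mu n) x / (x - mu a)))"
    using x by (intro sum.cong refl) (simp add: prod_remove_eq_divide poly_roots_poly)
  finally show ?thesis
    unfolding schur_def by (simp add: algebra_simps sum_distrib_left)
qed

lemma degree_schur_poly: "degree (schur_poly al w mu n) = Suc n"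
  and lead_coeff_schur_poly: "lead_coeff (schur_poly al w mu n) = 1"
proof -
  define g where "g = [:- al, 1:] * roots_poly mu n"
  define h where "h = (\<Sum>a<n. Polynomial.smult (w a) (\<Prod>b\<in>{..<n} - {a}. [:- mu b, 1:]))"
  have dg: "degree g = Suc n"
    unfolding g_def using lead_coeff_roots_poly[of mu n]
    by (subst degree_mult_eq) (auto simp: degree_roots_poly)
  have lg: "lead_coeff g = 1"
    unfolding g_def lead_coeff_mult by (simp add: lead_coeff_roots_poly)
  have "degree h \<le> n - 1"
    unfolding h_def
  proof (rule degree_sum_le)
    fix a assume a: "a \<in> {..<n}"
    have "degree (Polynomial.smult (w a) (\<Prod>b\<in>{..<n} - {a}. [:- mu b, 1:]))
        \<le> degree (\<Prod>b\<in>{..<n} - {a}. [:- mu b, 1:])"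
      by (rule degree_smult_le)
    also have "\<dots> = n - 1"
      using a by (subst degree_prod_sum_eq) auto
    finally show "degree (Polynomial.smult (w a) (\<Prod>b\<in>{..<n} - {a}. [:- mu b, 1:])) \<le> n - 1" .
  qed simp
  then have dh: "degree h < Suc n"
    by simp
  have "schur_poly al w mu n = g + - h"
    unfolding schur_poly_def g_def h_def by simp
  moreover have "degree (g + - h) = Suc n"
    using dg dh by (subst degree_add_eq_left) auto
  moreover have "coeff (g + - h) (Suc n) = 1"
    using lg dg dh by (simp add: coeff_eq_0)
  ultimately show "degree (schur_poly al w mu n) = Suc n" "lead_coeff (schur_poly al w mu n) = 1"
    by simp_all
qed

lemma poly_pderiv_schur_poly:
  assumes x: "\<forall>a<n. x \<noteq> mu a"
  shows "poly (pderiv (schur_poly al w mu n)) x =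
     (1 + (\<Sum>a<n. w a / ((x - mu a) * (x - mu a)))) * poly (roots_poly mu n) x
     + schur al w mu n x * (poly (roots_poly mu n) x * (\<Sum>a<n. 1 / (x - mu a)))"
proof -
  define S where "S = - (mu ` {..<n})"
  have S: "open S" "x \<in> S"
    using x unfolding S_def by (auto intro: open_Compl finite_imp_closed)
  have "DERIV (schur al w mu n) x :> 1 + (\<Sum>a<n. w a / ((x - mu a) * (x - mu a)))"
    unfolding schur_def[abs_def]
    by (rule derivative_eq_intros refl | use x in force)+ (simp add: sum_negf[symmetric])
  then have "DERIV (\<lambda>y. schur al w mu n y * poly (roots_poly mu n) y) x :>
      (1 + (\<Sum>a<n. w a / ((x - mu a) * (x - mu a)))) * poly (roots_poly mu n) x
       + poly (pderiv (roots_poly mu n)) x * schur al w mu n x"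
    by (intro DERIV_mult poly_DERIV)
  then have "DERIV (poly (schur_poly al w mu n)) x :>
      (1 + (\<Sum>a<n. w a / ((x - mu a) * (x - mu a)))) * poly (roots_poly mu n) x
       + poly (pderiv (roots_poly mu n)) x * schur al w mu n x"
    by (rule has_field_derivative_transform_within_open[OF _ S])
       (subst poly_schur_poly, auto simp: S_def)
  then have "poly (pderiv (schur_poly al w mu n)) x =
      (1 + (\<Sum>a<n. w a / ((x - mu a) * (x - mu a)))) * poly (roots_poly mu n) x
       + poly (pderiv (roots_poly mu n)) x * schur al w mu n x"
    using DERIV_unique[OF poly_DERIV] by blast
  then show ?thesis
    using poly_pderiv_roots_poly[OF x] by simp
qed

text \<open>Comparing the trace of the resolvent with the logarithmic derivative of the
  characteristic polynomial shows \<open>\<Prod>\<^sub>i (x - \<lambda>\<^sub>i) = schur x \<cdot> \<Prod>\<^sub>a (x - \<mu>\<^sub>a)\<close>.\<close>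

lemma roots_poly_eq_schur_poly:
  assumes ev: "herm_eigenvalues m A lam" and k: "k < m" and V: "unitary (m - 1) V"
    and D: "qmat_eq (m - 1) (qmat_mult (m - 1) (qmat_H V) (qmat_mult (m - 1) (qmat_del k A) V)) (qmat_diag mu)"
  defines "w \<equiv> (\<lambda>a. qnorm2 (\<Sum>a'<m - 1. qcnj (V a' a) * A (skip k a') k))"
  shows "roots_poly lam m = schur_poly (quat.Re (A k k)) w mu (m - 1)"
proof (rule monic_poly_eq_if_pderiv_cross_eq[OF degree_roots_poly _ lead_coeff_roots_poly lead_coeff_schur_poly])
  let ?f = "schur_poly (quat.Re (A k k)) w mu (m - 1)"
  have hA: "hermitian m A"
    using ev unfolding herm_eigenvalues_def by simp
  show "degree ?f = m"
    using k by (simp add: degree_schur_poly)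
  show "pderiv (roots_poly lam m) * ?f = pderiv ?f * roots_poly lam m"
  proof (rule poly_eqI_eventually_at_top)
    show "eventually (\<lambda>x. poly (pderiv (roots_poly lam m) * ?f) x = poly (pderiv ?f * roots_poly lam m) x) at_top"
      using eventually_gt_all_at_top[of m lam] eventually_gt_all_at_top[of "m - 1" mu]
    proof eventually_elim
      case (elim x)
      then have xlam: "\<forall>i<m. x \<noteq> lam i" and xmu: "\<forall>a<m - 1. x \<noteq> mu a"
        by force+
      obtain R where R: "qmat_eq m (qmat_mult m (char_mat x A) R) qmat_id"
        using char_mat_inverse[OF ev xlam] by metis
      note corner = resolvent_corner_and_trace[OF hA k V D xmu R]
      define \<sigma> where "\<sigma> = schur (quat.Re (A k k)) w mu (m - 1) x"
      define q where "q = poly (roots_poly mu (m - 1)) x"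
      define T where "T = (\<Sum>a<m - 1. 1 / (x - mu a))"
      define U where "U = (\<Sum>a<m - 1. w a / ((x - mu a) * (x - mu a)))"
      have "(\<Sum>i<m. 1 / (x - lam i)) = 1 / \<sigma> + (T + U / \<sigma>)"
        using trace_char_mat_right_inverse[OF ev xlam R] corner(3)
        unfolding \<sigma>_def T_def U_def w_def by (simp add: sum.distrib sum_divide_distrib)
      then have "poly (pderiv (roots_poly lam m) * ?f) x
          = poly (roots_poly lam m) x * (1 / \<sigma> + (T + U / \<sigma>)) * (\<sigma> * q)"
        using poly_pderiv_roots_poly[OF xlam] poly_schur_poly[OF xmu] unfolding \<sigma>_def q_def by simp
      also have "\<dots> = poly (roots_poly lam m) x * ((1 + U) * q + \<sigma> * (q * T))"
        using corner(1) unfolding \<sigma>_def w_def by (simp add: field_simps)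
      also have "\<dots> = poly (pderiv ?f * roots_poly lam m) x"
        using poly_pderiv_schur_poly[OF xmu] unfolding \<sigma>_def q_def T_def U_def by simp
      finally show ?case .
    qed
  qed
qed

lemma resolvent_corner_poly:
  assumes ev: "herm_eigenvalues m A lam" and k: "k < m"
    and evC: "herm_eigenvalues (m - 1) (qmat_del k A) mu"
  shows "eventually (\<lambda>x. \<forall>R. qmat_eq m (qmat_mult m (char_mat x A) R) qmat_id \<longrightarrow>
            quat.Re (R k k) * poly (roots_poly lam m) x = poly (roots_poly mu (m - 1)) x) at_top"
  using eventually_gt_all_at_top[of "m - 1" mu]
proof eventually_elim
  case (elim x)
  then have xmu: "\<forall>a<m - 1. x \<noteq> mu a"
    by force
  have hA: "hermitian m A"
    using ev unfolding herm_eigenvalues_def by simp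
  obtain V where V: "unitary (m - 1) V"
    and D: "qmat_eq (m - 1) (qmat_mult (m - 1) (qmat_H V) (qmat_mult (m - 1) (qmat_del k A) V)) (qmat_diag mu)"
    using evC unfolding herm_eigenvalues_def qmat_eq_def qmat_diag_def by auto
  show ?case
  proof (intro allI impI)
    fix R assume R: "qmat_eq m (qmat_mult m (char_mat x A) R) qmat_id"
    note corner = resolvent_corner_and_trace[OF hA k V D xmu R]
    show "quat.Re (R k k) * poly (roots_poly lam m) x = poly (roots_poly mu (m - 1)) x"
      using corner(1,2) poly_schur_poly[OF xmu] unfolding roots_poly_eq_schur_poly[OF ev k V D] by simp
  qed
qed

text \<open>Both sides equal \<open>tr (xI - A)\<^sup>-\<^sup>1 \<cdot> \<Prod>\<^sub>i (x - \<lambda>\<^sub>i)\<close> for large \<open>x\<close>.\<close>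

lemma pderiv_roots_poly_eq_sum:
  assumes ev: "herm_eigenvalues m A lam"
    and evC: "\<forall>k<m. herm_eigenvalues (m - 1) (qmat_del k A) (mu k)"
  shows "pderiv (roots_poly lam m) = (\<Sum>k<m. roots_poly (mu k) (m - 1))"
proof (rule poly_eqI_eventually_at_top)
  have "eventually (\<lambda>x. \<forall>k\<in>{..<m}. \<forall>R. qmat_eq m (qmat_mult m (char_mat x A) R) qmat_id \<longrightarrow>
            quat.Re (R k k) * poly (roots_poly lam m) x = poly (roots_poly (mu k) (m - 1)) x) at_top"
    using evC by (intro eventually_ball_finite ballI resolvent_corner_poly[OF ev]) auto
  then show "eventually (\<lambda>x. poly (pderiv (roots_poly lam m)) x = poly (\<Sum>k<m. roots_poly (mu k) (m - 1)) x) at_top"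
    using eventually_gt_all_at_top[of m lam]
  proof eventually_elim
    case (elim x)
    then have xlam: "\<forall>i<m. x \<noteq> lam i"
      by force
    obtain R where R: "qmat_eq m (qmat_mult m (char_mat x A) R) qmat_id"
      using char_mat_inverse[OF ev xlam] by metis
    have "poly (\<Sum>k<m. roots_poly (mu k) (m - 1)) x = (\<Sum>k<m. quat.Re (R k k) * poly (roots_poly lam m) x)"
      unfolding poly_sum using elim(1) R by simp
    also have "\<dots> = qmat_trace m R * poly (roots_poly lam m) x"
      by (simp add: qmat_trace_def sum_distrib_right)
    also have "\<dots> = poly (pderiv (roots_poly lam m)) x"
      using trace_char_mat_right_inverse[OF ev xlam R] poly_pderiv_roots_poly[OF xlam] by simp
    finally show ?case by simp
  qed
qed

section \<open>Existence of eigenvalues\<close>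

text \<open>A Hermitian quaternion matrix of size \<open>n\<close> acts on \<open>\<real>\<^sup>4\<^sup>n\<close> as a real symmetric matrix;
  an eigenvector of the latter is a quaternion eigenvector with a real eigenvalue.\<close>

definition qcomp :: "quat \<Rightarrow> nat \<Rightarrow> real" where
  "qcomp x r = (if r = 0 then quat.Re x else if r = 1 then Im1 x else if r = 2 then Im2 x else Im3 x)"

definition qunit :: "nat \<Rightarrow> quat" where
  "qunit s = (if s = 0 then Quat 1 0 0 0 else if s = 1 then Quat 0 1 0 0
              else if s = 2 then Quat 0 0 1 0 else Quat 0 0 0 1)"

definition quat_of_block :: "(nat \<Rightarrow> real) \<Rightarrow> nat \<Rightarrow> quat" where
  "quat_of_block y j = Quat (y (4 * j)) (y (4 * j + 1)) (y (4 * j + 2)) (y (4 * j + 3))"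

text \<open>The real \<open>4n \<times> 4n\<close> matrix of left multiplication by \<open>B\<close>.\<close>

definition real_rep :: "qmat \<Rightarrow> nat \<Rightarrow> nat \<Rightarrow> real" where
  "real_rep B a b = qcomp (B (a div 4) (b div 4) * qunit (b mod 4)) (a mod 4)"

lemma sum_lessThan_4: "(\<Sum>s<(4::nat). f s) = f 0 + f 1 + f 2 + (f 3 :: 'a :: comm_monoid_add)"
  by (simp add: numeral_eq_Suc add.assoc)

lemma sum_lessThan_mult_4: "(\<Sum>b<4 * (n::nat). f b) = (\<Sum>j<n. \<Sum>s<4. f (4 * j + s))"
proof (induction n)
  case (Suc n)
  have e: "4 * Suc n = Suc (Suc (Suc (Suc (4 * n))))" and t: "4 * n + 3 = Suc (Suc (Suc (4 * n)))"
    by simp_all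
  show ?case
    unfolding e using Suc by (simp add: sum_lessThan_4 add.assoc t)
qed simp

lemma quat_eqI_qcomp: "(\<And>r. r < 4 \<Longrightarrow> qcomp x r = qcomp y r) \<Longrightarrow> x = y"
  by (auto simp: quat_eq_iff qcomp_def dest: meta_spec[of _ 0] meta_spec[of _ 1] meta_spec[of _ 2] meta_spec[of _ 3])

lemma qcomp_simps:
  "r < 4 \<Longrightarrow> qcomp (quat_of_block y j) r = y (4 * j + r)"
  "qcomp (sum f A) r = (\<Sum>a\<in>A. qcomp (f a) r)"
  "qcomp (x * qreal c) r = qcomp x r * c"
  by (auto simp: qcomp_def quat_of_block_def numeral_eq_Suc less_Suc_eq)

lemma qnorm2_eq_sum_qcomp: "qnorm2 x = (\<Sum>s<4. (qcomp x s)\<^sup>2)"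
  by (simp add: sum_lessThan_4 qnorm2_def qcomp_def)

lemma real_rep_mult:
  assumes r: "r < 4"
  shows "(\<Sum>b<4 * n. real_rep B (4 * i + r) b * y b) = qcomp (\<Sum>j<n. B i j * quat_of_block y j) r"
proof -
  have lin: "(\<Sum>s<4. qcomp (q * qunit s) r * y (4 * j + s)) = qcomp (q * quat_of_block y j) r" for q j
    using r unfolding sum_lessThan_4
    by (auto simp: qcomp_def qunit_def quat_of_block_def numeral_eq_Suc less_Suc_eq algebra_simps)
  have "(\<Sum>b<4 * n. real_rep B (4 * i + r) b * y b)
      = (\<Sum>j<n. \<Sum>s<4. qcomp (B i j * qunit s) r * y (4 * j + s))"
    unfolding sum_lessThan_mult_4 using r by (intro sum.cong refl) (simp add: real_rep_def)
  then show ?thesis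
    by (simp add: lin qcomp_simps)
qed

lemma real_rep_symmetric:
  assumes "hermitian n B" "a < 4 * n" "b < 4 * n"
  shows "real_rep B b a = real_rep B a b"
proof -
  have sym: "qcomp (qcnj q * qunit s) r = qcomp (q * qunit r) s" if "r < 4" "s < 4" for q r s
    using that by (auto simp: qcomp_def qunit_def numeral_eq_Suc less_Suc_eq)
  have "B (b div 4) (a div 4) = qcnj (B (a div 4) (b div 4))"
    using assms unfolding hermitian_def qmat_H_def by auto
  then show ?thesis
    unfolding real_rep_def by (simp add: sym)
qed

lemma complex_eigenvector_exists:
  fixes M :: "nat \<Rightarrow> nat \<Rightarrow> complex"
  assumes "0 < N"
  obtains v k where "\<exists>b<N. v b \<noteq> 0" "\<And>a. a < N \<Longrightarrow> (\<Sum>b<N. M a b * v b) = k * v a"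
proof -
  define M' where "M' = mat N N (\<lambda>(a, b). M a b)"
  have M': "M' \<in> carrier_mat N N"
    unfolding M'_def by simp
  obtain k where "eigenvalue M' k"
    using spectrum_non_empty[OF M'] assms unfolding spectrum_def by auto
  then obtain v where "eigenvector M' v k"
    unfolding eigenvalue_def by auto
  then have vc: "v \<in> carrier_vec N" and v0: "v \<noteq> 0\<^sub>v N" and Mv: "M' *\<^sub>v v = k \<cdot>\<^sub>v v"
    using M' unfolding eigenvector_def by auto
  show ?thesis
  proof
    show "\<exists>b<N. v $ b \<noteq> 0"
      using vc v0 by (metis carrier_vecD eq_vecI index_zero_vec)
    show "(\<Sum>b<N. M a b * v $ b) = k * v $ a" if "a < N" for a
    proof -
      have "(M' *\<^sub>v v) $ a = k * v $ a"
        using Mv that vc by simp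
      moreover have "(M' *\<^sub>v v) $ a = (\<Sum>b<N. M a b * v $ b)"
        using that vc unfolding M'_def by (simp add: scalar_prod_def lessThan_atLeast0)
      ultimately show ?thesis by simp
    qed
  qed
qed

lemma real_symmetric_eigenvalue_real:
  fixes M :: "nat \<Rightarrow> nat \<Rightarrow> real"
  assumes sym: "\<And>a b. a < N \<Longrightarrow> b < N \<Longrightarrow> M b a = M a b"
    and v: "\<exists>b<N. v b \<noteq> 0"
    and Mv: "\<And>a. a < N \<Longrightarrow> (\<Sum>b<N. complex_of_real (M a b) * v b) = k * v a"
  shows "Im k = 0"
proof -
  define s where "s = (\<Sum>a<N. cnj (v a) * (\<Sum>b<N. complex_of_real (M a b) * v b))"
  have "cnj s = (\<Sum>a<N. \<Sum>b<N. v a * complex_of_real (M a b) * cnj (v b))"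
    unfolding s_def by (simp add: cnj_sum sum_distrib_left mult.assoc)
  also have "\<dots> = (\<Sum>b<N. \<Sum>a<N. v a * complex_of_real (M a b) * cnj (v b))"
    by (rule sum.swap)
  also have "\<dots> = s"
    unfolding s_def sum_distrib_left
  proof (intro sum.cong refl)
    fix b a assume "b \<in> {..<N}" "a \<in> {..<N}"
    then show "v a * complex_of_real (M a b) * cnj (v b) = cnj (v b) * (complex_of_real (M b a) * v a)"
      using sym[of a b] by simp
  qed
  finally have "Im s = 0"
    by (simp add: complex_eq_iff)
  define r where "r = (\<Sum>a<N. (Complex.Re (v a))\<^sup>2 + (Im (v a))\<^sup>2)"
  have "s = (\<Sum>a<N. cnj (v a) * (k * v a))"
    unfolding s_def using Mv by simp
  also have "\<dots> = k * complex_of_real r"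
    unfolding r_def by (simp add: sum_distrib_left complex_eq_iff power2_eq_square algebra_simps sum.distrib)
  finally have "s = k * complex_of_real r" .
  moreover have "r > 0"
  proof -
    obtain b where b: "b < N" "v b \<noteq> 0"
      using v by blast
    then have "0 < (Complex.Re (v b))\<^sup>2 + (Im (v b))\<^sup>2"
      by (simp add: complex_eq_iff sum_power2_gt_zero_iff)
    also have "\<dots> \<le> r"
      unfolding r_def using b by (intro member_le_sum) auto
    finally show ?thesis .
  qed
  ultimately show ?thesis
    using \<open>Im s = 0\<close> by simp
qed

lemma real_symmetric_eigenvector_exists:
  fixes M :: "nat \<Rightarrow> nat \<Rightarrow> real"
  assumes sym: "\<And>a b. a < N \<Longrightarrow> b < N \<Longrightarrow> M b a = M a b" and N: "0 < N"
  obtains y \<mu> where "\<exists>b<N. y b \<noteq> 0" "\<And>a. a < N \<Longrightarrow> (\<Sum>b<N. M a b * y b) = \<mu> * y a"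
proof -
  obtain v k where v: "\<exists>b<N. v b \<noteq> 0"
    and Mv: "\<And>a. a < N \<Longrightarrow> (\<Sum>b<N. complex_of_real (M a b) * v b) = k * v a"
    using complex_eigenvector_exists[OF N, where M = "\<lambda>a b. complex_of_real (M a b)"] by blast
  have k: "Im k = 0"
    by (rule real_symmetric_eigenvalue_real[OF sym v Mv])
  have re: "(\<Sum>b<N. M a b * Complex.Re (v b)) = Complex.Re k * Complex.Re (v a)" if a: "a < N" for a
  proof -
    have "(\<Sum>b<N. M a b * Complex.Re (v b)) = Complex.Re (\<Sum>b<N. complex_of_real (M a b) * v b)"
      by (simp add: Re_sum)
    also have "\<dots> = Complex.Re (k * v a)"
      using Mv[OF a] by (rule arg_cong)
    finally show ?thesis
      using k by simp
  qed
  have im: "(\<Sum>b<N. M a b * Im (v b)) = Complex.Re k * Im (v a)" if a: "a < N" for a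
  proof -
    have "(\<Sum>b<N. M a b * Im (v b)) = Im (\<Sum>b<N. complex_of_real (M a b) * v b)"
      by (simp add: Im_sum)
    also have "\<dots> = Im (k * v a)"
      using Mv[OF a] by (rule arg_cong)
    finally show ?thesis
      using k by simp
  qed
  show ?thesis
  proof (cases "\<exists>b<N. Complex.Re (v b) \<noteq> 0")
    case True
    then show ?thesis
      by (intro that[of "\<lambda>b. Complex.Re (v b)" "Complex.Re k"] re)
  next
    case False
    obtain b where "b < N" "v b \<noteq> 0"
      using v by blast
    with False have "\<exists>b<N. Im (v b) \<noteq> 0"
      using complex_eqI[of "v b" 0] by auto
    then show ?thesis
      by (intro that[of "\<lambda>b. Im (v b)" "Complex.Re k"] im)
  qed
qed

lemma eigenvector_of_real_rep:
  assumes ey: "\<And>a. a < 4 * n \<Longrightarrow> (\<Sum>b<4 * n. real_rep B a b * y b) = \<mu> * y a" and i: "i < n"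
  shows "(\<Sum>j<n. B i j * quat_of_block y j) = quat_of_block y i * qreal \<mu>"
proof (rule quat_eqI_qcomp)
  fix r :: nat assume r: "r < 4"
  have "qcomp (\<Sum>j<n. B i j * quat_of_block y j) r = (\<Sum>b<4 * n. real_rep B (4 * i + r) b * y b)"
    by (rule real_rep_mult[OF r, symmetric])
  also have "\<dots> = \<mu> * y (4 * i + r)"
    using ey i r by simp
  finally show "qcomp (\<Sum>j<n. B i j * quat_of_block y j) r = qcomp (quat_of_block y i * qreal \<mu>) r"
    using r by (simp add: qcomp_simps)
qed

lemma sum_qnorm2_quat_of_block: "(\<Sum>j<n. qnorm2 (quat_of_block y j)) = (\<Sum>b<4 * n. (y b)\<^sup>2)"
  unfolding sum_lessThan_mult_4 qnorm2_eq_sum_qcomp by (intro sum.cong refl) (simp add: qcomp_simps)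

lemma hermitian_eigenvector_exists:
  assumes h: "hermitian n B" and n: "0 < n"
  obtains w \<mu> where "(\<Sum>i<n. qnorm2 (w i)) = 1" "\<And>i. i < n \<Longrightarrow> (\<Sum>j<n. B i j * w j) = w i * qreal \<mu>"
proof -
  obtain y \<mu> where ynz: "\<exists>b<4 * n. y b \<noteq> 0"
    and ey: "\<And>a. a < 4 * n \<Longrightarrow> (\<Sum>b<4 * n. real_rep B a b * y b) = \<mu> * y a"
  proof -
    have "0 < 4 * n"
      using n by simp
    from real_symmetric_eigenvector_exists[where M = "real_rep B" and N = "4 * n", OF real_rep_symmetric[OF h] this] that
    show ?thesis
      by blast
  qed
  define S where "S = (\<Sum>j<n. qnorm2 (quat_of_block y j))"
  have "S > 0"
  proof -
    obtain b where b: "b < 4 * n" "y b \<noteq> 0"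
      using ynz by blast
    then have "(y b)\<^sup>2 \<le> S"
      unfolding S_def sum_qnorm2_quat_of_block by (auto intro: member_le_sum)
    moreover have "(y b)\<^sup>2 > 0"
      using b by simp
    ultimately show ?thesis by linarith
  qed
  define c where "c = 1 / sqrt S"
  define w where "w = (\<lambda>j. quat_of_block y j * qreal c)"
  show ?thesis
  proof
    have "(\<Sum>i<n. qnorm2 (w i)) = c\<^sup>2 * S"
      unfolding w_def S_def by (simp add: qnorm2_qreal_mult flip: qreal_commute add: sum_distrib_left)
    also have "\<dots> = 1"
      using \<open>S > 0\<close> by (simp add: c_def power_divide)
    finally show "(\<Sum>i<n. qnorm2 (w i)) = 1" .
    show "(\<Sum>j<n. B i j * w j) = w i * qreal \<mu>" if "i < n" for i
    proof -
      have "(\<Sum>j<n. B i j * w j) = (\<Sum>j<n. B i j * quat_of_block y j) * qreal c"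
        unfolding w_def by (simp add: sum_distrib_right mult.assoc)
      also have "\<dots> = quat_of_block y i * qreal (\<mu> * c)"
        using eigenvector_of_real_rep[OF ey that] by (simp add: mult.assoc qreal_arith)
      also have "\<dots> = w i * qreal \<mu>"
        unfolding w_def by (simp add: mult.assoc qreal_arith mult.commute)
      finally show ?thesis .
    qed
  qed
qed
text \<open>For \<open>v = 0\<close> the junk value \<open>2 / 0 = 0\<close> makes this the identity.\<close>

definition householder :: "nat \<Rightarrow> (nat \<Rightarrow> quat) \<Rightarrow> qmat" where
  "householder n v = (\<lambda>i j. qmat_id i j - qreal (2 / (\<Sum>k<n. qnorm2 (v k))) * (v i * qcnj (v j)))"

lemma outer_mult_outer:
  "(qreal a * (x * qcnj y)) * (qreal b * (y * qcnj z)) = qreal (a * b * qnorm2 y) * (x * qcnj z)"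
proof -
  have "(qreal a * (x * qcnj y)) * (qreal b * (y * qcnj z)) = qreal a * ((x * qcnj y) * (qreal b * (y * qcnj z)))"
    by (simp only: mult.assoc)
  also have "(x * qcnj y) * (qreal b * (y * qcnj z)) = qreal b * (x * (qcnj y * y) * qcnj z)"
    by (simp only: qreal_left_commute mult.assoc)
  also have "x * (qcnj y * y) * qcnj z = qreal (qnorm2 y) * (x * qcnj z)"
    unfolding mult_qcnj_left by (metis mult.assoc qreal_commute)
  finally show ?thesis
    by (simp only: qreal_arith mult.assoc)
qed

lemma unitary_householder: "unitary n (householder n v)"
proof -
  define c where "c = (\<Sum>k<n. qnorm2 (v k))"
  define P where "P = (\<lambda>i j. qreal (2 / c) * (v i * qcnj (v j)))"
  have H: "householder n v = (\<lambda>i j. qmat_id i j - P i j)"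
    unfolding householder_def P_def c_def ..
  have PP: "qmat_mult n P P i j = qreal (2 / c * c) * P i j" for i j
  proof -
    have "qmat_mult n P P i j = (\<Sum>k<n. qreal (2 / c * (2 / c) * qnorm2 (v k)) * (v i * qcnj (v j)))"
      unfolding qmat_mult_def P_def outer_mult_outer ..
    also have "\<dots> = qreal (2 / c * (2 / c) * c) * (v i * qcnj (v j))"
      by (simp add: sum_distrib_right sum_distrib_left qreal_sum c_def)
    finally show ?thesis
      unfolding P_def by (simp add: qreal_arith mult_ac)
  qed
  have HH: "qmat_eq n (qmat_mult n (householder n v) (householder n v)) qmat_id"
    unfolding qmat_eq_def
  proof (intro allI impI)
    fix i j assume "i < n" "j < n"
    then have "qmat_mult n (householder n v) (householder n v) i j = qmat_id i j - P i j - P i j + qreal (2 / c * c) * P i j"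
      unfolding H qmat_mult_diff_left qmat_mult_diff_right by (simp add: PP)
    also have "\<dots> = qmat_id i j + qreal (2 / c * c - 2) * P i j"
      by (simp only: quat_eq_iff quat_component_simps) (simp add: algebra_simps)
    also have "qreal (2 / c * c - 2) * P i j = 0"
      by (cases "c = 0") (auto simp: P_def)
    finally show "qmat_mult n (householder n v) (householder n v) i j = qmat_id i j" by simp
  qed
  have "qmat_H (householder n v) = householder n v"
    unfolding householder_def qmat_H_def qmat_id_def by (auto simp: fun_eq_iff qcnj_mult qreal_commute)
  then show ?thesis
    using HH unfolding unitary_iff_qmat_eq by simp
qed

definition qsgn :: "quat \<Rightarrow> quat" where
  "qsgn t = (if t = 0 then 1 else qreal (1 / sqrt (qnorm2 t)) * t)"

lemma qnorm2_qsgn: "qnorm2 (qsgn t) = 1"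
proof (cases "t = 0")
  case False
  then have "qnorm2 t > 0"
    using qnorm2_nonneg[of t] qnorm2_eq_0_iff[of t] by linarith
  then show ?thesis
    using False by (simp add: qsgn_def qnorm2_qreal_mult power_divide)
qed (simp add: qsgn_def qnorm2_def)

lemma qsgn_scale: "t = qreal (sqrt (qnorm2 t)) * qsgn t"
proof (cases "t = 0")
  case False
  then have "qnorm2 t > 0"
    using qnorm2_nonneg[of t] qnorm2_eq_0_iff[of t] by linarith
  then show ?thesis
    using False by (simp add: qsgn_def qreal_arith)
qed (simp add: qsgn_def qnorm2_def)

lemma qcnj_mult_qsgn: "qcnj t * qsgn t = qreal (sqrt (qnorm2 t))"
proof -
  have "qcnj t * qsgn t = qreal (sqrt (qnorm2 t)) * (qcnj (qsgn t) * qsgn t)"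
    by (subst (1) qsgn_scale) (simp add: qcnj_mult qreal_commute mult.assoc)
  then show ?thesis
    using qnorm2_qsgn[of t] by (simp add: mult_qcnj_left)
qed

lemma unitary_scale_first_column:
  assumes H: "unitary n H" and s: "qcnj s * s = 1"
  shows "unitary n (\<lambda>i j. H i j * (if j = 0 then s else 1))"
  unfolding unitary_def
proof (intro allI impI)
  fix i j assume "i < n" "j < n"
  have "qmat_mult n (qmat_H (\<lambda>i j. H i j * (if j = 0 then s else 1))) (\<lambda>i j. H i j * (if j = 0 then s else 1)) i j
      = qcnj (if i = 0 then s else 1) * qmat_mult n (qmat_H H) H i j * (if j = 0 then s else 1)"
    unfolding qmat_mult_def qmat_H_def
    by (simp only: qcnj_mult mult.assoc sum_distrib_left sum_distrib_right)
  also have "qmat_mult n (qmat_H H) H i j = (if i = j then 1 else 0)"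
    using H \<open>i < n\<close> \<open>j < n\<close> unfolding unitary_def by blast
  finally show "qmat_mult n (qmat_H (\<lambda>i j. H i j * (if j = 0 then s else 1))) (\<lambda>i j. H i j * (if j = 0 then s else 1)) i j
      = (if i = j then 1 else 0)"
    using s by (cases "i = j"; cases "i = 0") auto
qed

text \<open>A unit vector \<open>w\<close> is the first column of a unitary matrix: reflect \<open>qsgn (w\<^sub>0) e\<^sub>0\<close>
  onto \<open>w\<close> and then rescale the first column by the unit quaternion \<open>qsgn (w\<^sub>0)\<close>.\<close>

lemma unitary_first_column_exists:
  assumes n: "0 < n" and w: "(\<Sum>i<n. qnorm2 (w i)) = 1"
  obtains W where "unitary n W" "\<And>i. i < n \<Longrightarrow> W i 0 = w i"
proof -
  define s where "s = qsgn (w 0)"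
  define r where "r = sqrt (qnorm2 (w 0))"
  define v where "v = (\<lambda>i. w i - (if i = 0 then s else 0))"
  define c where "c = (\<Sum>i<n. qnorm2 (v i))"
  define H where "H = householder n v"
  define W where "W = (\<lambda>i j. H i j * (if j = 0 then s else 1))"
  have ws: "qcnj (w 0) * s = qreal r"
    unfolding s_def r_def by (rule qcnj_mult_qsgn)
  have ns: "qnorm2 s = 1"
    unfolding s_def by (rule qnorm2_qsgn)
  then have ss: "qcnj s * s = 1"
    by (simp add: mult_qcnj_left)
  have c: "c = 2 - 2 * r"
  proof -
    have "c = (\<Sum>i<n. qnorm2 (w i) + (if i = 0 then qnorm2 (w 0 - s) - qnorm2 (w 0) else 0))"
      unfolding c_def v_def by (intro sum.cong refl) auto
    also have "\<dots> = 1 + (qnorm2 (w 0 - s) - qnorm2 (w 0))"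
      using n by (simp add: sum.distrib w)
    also have "qnorm2 (w 0 - s) = qnorm2 (w 0) + 1 - 2 * r"
      unfolding qnorm2_diff ws ns by simp
    finally show ?thesis by simp
  qed
  show ?thesis
  proof
    show "unitary n W"
      unfolding W_def H_def by (rule unitary_scale_first_column[OF unitary_householder ss])
    show "W i 0 = w i" if i: "i < n" for i
    proof -
      have "qcnj (v 0) * s = qreal (r - 1)"
        using ws ss by (simp add: v_def left_diff_distrib quat_eq_iff)
      then have "W i 0 = qmat_id i 0 * s - qreal (2 / c * (r - 1)) * v i"
        unfolding W_def H_def householder_def c_def[symmetric]
        by (simp add: left_diff_distrib mult.assoc qreal_arith flip: qreal_commute[of "r - 1"])
      also have "\<dots> = w i"
      proof (cases "c = 0")
        case True
        then have "\<forall>k<n. qnorm2 (v k) = 0"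
          unfolding c_def by (subst (asm) sum_nonneg_eq_0_iff) (auto intro: qnorm2_nonneg)
        then have "v i = 0"
          using i by (simp add: qnorm2_eq_0_iff)
        then show ?thesis
          using True by (simp add: v_def qmat_id_def split: if_splits)
      next
        case False
        then have "2 / c * (r - 1) = -1"
          unfolding c by (simp add: field_simps)
        then show ?thesis
          by (simp add: v_def qmat_id_def quat_eq_iff)
      qed
      finally show ?thesis .
    qed
  qed
qed

lemma unitary_mult:
  assumes W: "unitary n W" and V: "unitary n V"
  shows "unitary n (qmat_mult n W V)"
proof -
  have "qmat_mult n (qmat_H (qmat_mult n W V)) (qmat_mult n W V)
      = qmat_mult n (qmat_H V) (qmat_mult n (qmat_mult n (qmat_H W) W) V)"
    by (simp add: qmat_H_mult qmat_mult_assoc)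
  also have "qmat_eq n \<dots> (qmat_mult n (qmat_H V) (qmat_mult n qmat_id V))"
    using W unfolding unitary_iff_qmat_eq by (intro qmat_eq_mult_right qmat_eq_mult_left)
  also have "qmat_eq n \<dots> (qmat_mult n (qmat_H V) V)"
    by (intro qmat_eq_mult_right qmat_id_mult_eq)
  also have "qmat_eq n \<dots> qmat_id"
    using V unfolding unitary_iff_qmat_eq .
  finally show ?thesis
    unfolding unitary_iff_qmat_eq .
qed

lemma hermitian_unitary_conj:
  assumes "hermitian n B"
  shows "hermitian n (qmat_mult n (qmat_H W) (qmat_mult n B W))"
proof -
  have "qmat_H (qmat_mult n (qmat_H W) (qmat_mult n B W)) = qmat_mult n (qmat_H W) (qmat_mult n (qmat_H B) W)"
    by (simp add: qmat_H_mult qmat_mult_assoc)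
  also have "qmat_eq n \<dots> (qmat_mult n (qmat_H W) (qmat_mult n B W))"
    by (intro qmat_eq_mult_right qmat_eq_mult_left hermitian_qmat_eq assms)
  finally show ?thesis
    unfolding hermitian_def qmat_eq_def by auto
qed

lemma unitary_conj_eigenvector_column:
  assumes W: "unitary n W" and ew: "\<And>i. i < n \<Longrightarrow> (\<Sum>j<n. B i j * W j 0) = W i 0 * qreal \<mu>"
    and i: "i < n"
  shows "qmat_mult n (qmat_H W) (qmat_mult n B W) i 0 = (if i = 0 then qreal \<mu> else 0)"
proof -
  have "qmat_mult n (qmat_H W) (qmat_mult n B W) i 0 = (\<Sum>p<n. qcnj (W p i) * (W p 0 * qreal \<mu>))"
    unfolding qmat_H_def qmat_mult_def[of n "\<lambda>i j. qcnj (W j i)"]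
    using ew by (intro sum.cong refl) (simp add: qmat_mult_def)
  also have "\<dots> = (\<Sum>p<n. qcnj (W p i) * W p 0) * qreal \<mu>"
    by (simp add: sum_distrib_right mult.assoc)
  also have "(\<Sum>p<n. qcnj (W p i) * W p 0) = (if i = 0 then 1 else 0)"
    using W i unfolding unitary_def qmat_mult_def qmat_H_def by auto
  finally show ?thesis by simp
qed

text \<open>The spectral theorem: deflate by a unitary matrix whose first column is a unit
  eigenvector, and diagonalise the remaining block by induction.\<close>

theorem herm_eigenvalues_exists: "hermitian n B \<Longrightarrow> \<exists>lam. herm_eigenvalues n B lam"
proof (induction n arbitrary: B)
  case 0
  then show ?case
    unfolding herm_eigenvalues_def unitary_def by auto
next
  case (Suc n)
  obtain w \<mu> where w: "(\<Sum>i<Suc n. qnorm2 (w i)) = 1"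
    and ew: "\<And>i. i < Suc n \<Longrightarrow> (\<Sum>j<Suc n. B i j * w j) = w i * qreal \<mu>"
    using hermitian_eigenvector_exists[OF Suc.prems] by blast
  obtain W where W: "unitary (Suc n) W" and Wc: "\<And>i. i < Suc n \<Longrightarrow> W i 0 = w i"
    using unitary_first_column_exists[OF _ w] by blast
  define B1 where "B1 = qmat_mult (Suc n) (qmat_H W) (qmat_mult (Suc n) B W)"
  have col0: "B1 i 0 = (if i = 0 then qreal \<mu> else 0)" if "i < Suc n" for i
    unfolding B1_def using W ew Wc that by (intro unitary_conj_eigenvector_column) auto
  have hB1: "hermitian (Suc n) B1"
    unfolding B1_def by (rule hermitian_unitary_conj[OF Suc.prems])
  obtain lam2 where "herm_eigenvalues n (qmat_del 0 B1) lam2"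
    using Suc.IH hermitian_qmat_del[OF hB1, of 0] by auto
  then obtain V where V: "unitary n V"
    and D: "qmat_eq n (qmat_mult n (qmat_H V) (qmat_mult n (qmat_del 0 B1) V)) (qmat_diag lam2)"
    unfolding herm_eigenvalues_def qmat_eq_def qmat_diag_def by auto
  define V' where "V' = qmat_extend_at 0 V"
  define U where "U = qmat_mult (Suc n) W V'"
  define lam where "lam = (\<lambda>i. if i = 0 then \<mu> else lam2 (i - 1))"
  have V': "unitary (Suc n) V'"
    unfolding V'_def using unitary_qmat_extend_at[of 0 "Suc n" V] V by simp
  have UBU: "qmat_mult (Suc n) (qmat_H U) (qmat_mult (Suc n) B U)
      = qmat_mult (Suc n) (qmat_H V') (qmat_mult (Suc n) B1 V')"
    unfolding U_def B1_def by (simp add: qmat_H_mult qmat_mult_assoc)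
  note arrow = qmat_extend_at_conj[of 0 "Suc n" B1 V lam2, folded V'_def, simplified, OF hB1 D]
  have "qmat_mult (Suc n) (qmat_H U) (qmat_mult (Suc n) B U) i j = (if i = j then qreal (lam i) else 0)"
    if i: "i < Suc n" and j: "j < Suc n" for i j
    unfolding UBU using i j col0 col0[of 0] arrow
    by (cases rule: index_cases_skip[OF i, of 0]; cases rule: index_cases_skip[OF j, of 0])
       (auto simp: lam_def skip_def)
  with unitary_mult[OF W V'] show ?case
    unfolding herm_eigenvalues_def U_def using Suc.prems by blast
qed

section \<open>Elementary symmetric functions and principal minors\<close>

definition elem_sym :: "(nat \<Rightarrow> real) \<Rightarrow> nat \<Rightarrow> nat \<Rightarrow> real" where
  "elem_sym lam n j = (\<Sum>S\<in>{S. S \<subseteq> {..<n} \<and> card S = j}. \<Prod>i\<in>S. lam i)"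

lemma coeff_roots_poly:
  assumes j: "j \<le> n"
  shows "coeff (roots_poly lam n) (n - j) = (-1) ^ j * elem_sym lam n j"
proof -
  have "roots_poly lam n = (\<Prod>i<n. [:- lam i:] + monom 1 1)"
    unfolding roots_poly_def by (intro prod.cong refl) (simp add: monom_Suc)
  also have "\<dots> = (\<Sum>X\<in>Pow {..<n}. (\<Prod>i\<in>X. [:- lam i:]) * (\<Prod>i\<in>{..<n} - X. monom 1 1))"
    by (rule prod_add) simp
  also have "\<dots> = (\<Sum>X\<in>Pow {..<n}. [:\<Prod>i\<in>X. - lam i:] * monom 1 (n - card X))"
  proof (intro sum.cong refl)
    fix X assume X: "X \<in> Pow {..<n}"
    then have fX: "finite X"
      by (auto intro: finite_subset)
    have "(\<Prod>i\<in>X. [:- lam i:]) = [:\<Prod>i\<in>X. - lam i:]"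
      using fX by (induction X rule: finite_induct) auto
    moreover have "(\<Prod>i\<in>{..<n} - X. monom (1::real) 1) = monom 1 (n - card X)"
      using X fX by (simp add: monom_power card_Diff_subset)
    ultimately show "(\<Prod>i\<in>X. [:- lam i:]) * (\<Prod>i\<in>{..<n} - X. monom 1 1)
        = [:\<Prod>i\<in>X. - lam i:] * monom 1 (n - card X)"
      by simp
  qed
  finally have "coeff (roots_poly lam n) (n - j)
      = (\<Sum>X\<in>Pow {..<n}. coeff ([:\<Prod>i\<in>X. - lam i:] * monom 1 (n - card X)) (n - j))"
    by (simp add: coeff_sum)
  also have "\<dots> = (\<Sum>X\<in>Pow {..<n}. if card X = j then (\<Prod>i\<in>X. - lam i) else 0)"
  proof (intro sum.cong refl)
    fix X assume "X \<in> Pow {..<n}"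
    then have "card X \<le> n"
      by (metis PowD card_lessThan card_mono finite_lessThan)
    then show "coeff ([:\<Prod>i\<in>X. - lam i:] * monom 1 (n - card X)) (n - j)
        = (if card X = j then \<Prod>i\<in>X. - lam i else 0)"
      using j by (auto simp: coeff_monom)
  qed
  also have "\<dots> = (\<Sum>X\<in>{S. S \<subseteq> {..<n} \<and> card S = j}. (-1) ^ j * (\<Prod>i\<in>X. lam i))"
    by (subst sum.inter_filter[symmetric]) (auto intro!: sum.cong simp: prod_uminus)
  finally show ?thesis
    by (simp add: elem_sym_def sum_distrib_left)
qed

lemma elem_sym_pderiv_identity:
  assumes d: "pderiv (roots_poly lam m) = (\<Sum>k<m. roots_poly (mu k) (m - 1))" and j: "j < m"
  shows "real (m - j) * elem_sym lam m j = (\<Sum>k<m. elem_sym (mu k) (m - 1) j)"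
proof -
  have "coeff (pderiv (roots_poly lam m)) (m - 1 - j) = real (m - j) * ((-1) ^ j * elem_sym lam m j)"
    unfolding coeff_pderiv using j coeff_roots_poly[of j m lam] by (simp add: Suc_diff_Suc)
  moreover have "coeff (\<Sum>k<m. roots_poly (mu k) (m - 1)) (m - 1 - j) = (\<Sum>k<m. (-1) ^ j * elem_sym (mu k) (m - 1) j)"
    unfolding coeff_sum using j by (intro sum.cong refl coeff_roots_poly) auto
  ultimately have "real (m - j) * ((-1) ^ j * elem_sym lam m j) = (-1) ^ j * (\<Sum>k<m. elem_sym (mu k) (m - 1) j)"
    using d by (simp add: sum_distrib_left)
  then show ?thesis
    by (cases "even j") auto
qed

lemma sorted_list_of_set_image_strict_mono:
  fixes f :: "nat \<Rightarrow> nat"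
  assumes f: "strict_mono f" and T: "finite T"
  shows "sorted_list_of_set (f ` T) = map f (sorted_list_of_set T)"
proof -
  have "sorted_wrt (<) (map f (sorted_list_of_set T))"
    using sorted_wrt_mono_rel[OF _ strict_sorted_list_of_set[of T]] f
    by (simp add: sorted_wrt_map strict_mono_less)
  moreover have "set (map f (sorted_list_of_set T)) = f ` T"
    using T by simp
  moreover have "length (map f (sorted_list_of_set T)) = card (f ` T)"
    using T strict_mono_imp_inj_on[OF f] by (simp add: card_image inj_on_subset)
  ultimately show ?thesis
    using T by (subst sorted_list_of_set_unique[symmetric]) auto
qed

lemma principal_sub_qmat_del:
  assumes "finite T"
  shows "qmat_eq (card T) (principal_sub (qmat_del k A) T) (principal_sub A (skip k ` T))"
  using assms unfolding qmat_eq_def principal_sub_def qmat_del_def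
  by (simp add: sorted_list_of_set_image_strict_mono[OF strict_mono_skip])

lemma principal_sub_lessThan: "qmat_eq m (principal_sub A {..<m}) A"
  unfolding qmat_eq_def principal_sub_def by (simp add: lessThan_atLeast0)

lemma sum_subsets_skip_image:
  assumes k: "k < m"
  shows "(\<Sum>T\<in>{T. T \<subseteq> {..<m - 1} \<and> card T = j}. g (skip k ` T))
       = (\<Sum>S\<in>{S. S \<subseteq> {..<m} - {k} \<and> card S = j}. g S)"
proof -
  have inj: "inj (skip k)"
    using strict_mono_imp_inj_on[OF strict_mono_skip] .
  then have "inj_on ((`) (skip k)) {T. T \<subseteq> {..<m - 1} \<and> card T = j}"
    by (auto simp: inj_on_def inj_image_eq_iff)
  moreover have "{S. S \<subseteq> {..<m} - {k} \<and> card S = j} = (`) (skip k) ` {T. T \<subseteq> {..<m - 1} \<and> card T = j}"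
    unfolding skip_image_lessThan[OF k, symmetric] subset_image_iff
    using inj by (auto simp: card_image inj_on_subset)
  ultimately show ?thesis
    by (rule sum.reindex_cong[symmetric]) simp
qed

lemma sum_lessThan_subsets_remove:
  "(\<Sum>k<m. \<Sum>S\<in>{S. S \<subseteq> {..<m} - {k} \<and> card S = j}. g S)
     = real (m - j) * (\<Sum>S\<in>{S. S \<subseteq> {..<m} \<and> card S = j}. (g S :: real))"
proof -
  define F where "F = {S. S \<subseteq> {..<m} \<and> card S = j}"
  have fF: "finite F"
    unfolding F_def by (rule finite_subset[of _ "Pow {..<m}"]) auto
  have "(\<Sum>k<m. \<Sum>S\<in>{S. S \<subseteq> {..<m} - {k} \<and> card S = j}. g S) = (\<Sum>k<m. \<Sum>S\<in>F. if k \<notin> S then g S else 0)"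
  proof (rule sum.cong[OF refl])
    fix k
    have "{S. S \<subseteq> {..<m} - {k} \<and> card S = j} = {S\<in>F. k \<notin> S}"
      unfolding F_def by auto
    then show "(\<Sum>S\<in>{S. S \<subseteq> {..<m} - {k} \<and> card S = j}. g S) = (\<Sum>S\<in>F. if k \<notin> S then g S else 0)"
      using fF by (simp add: sum.inter_filter)
  qed
  also have "\<dots> = (\<Sum>S\<in>F. \<Sum>k<m. if k \<notin> S then g S else 0)"
    by (rule sum.swap)
  also have "\<dots> = (\<Sum>S\<in>F. real (m - j) * g S)"
  proof (rule sum.cong[OF refl])
    fix S assume "S \<in> F"
    then have "S \<subseteq> {..<m}" "card S = j"
      unfolding F_def by auto
    then have "card ({..<m} - S) = m - j"
      by (subst card_Diff_subset) (auto intro: finite_subset)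
    moreover have "(\<Sum>k<m. if k \<notin> S then g S else 0) = real (card ({..<m} - S)) * g S"
      by (simp add: sum.inter_filter[symmetric] set_diff_eq)
    ultimately show "(\<Sum>k<m. if k \<notin> S then g S else 0) = real (m - j) * g S"
      by simp
  qed
  finally show ?thesis
    unfolding F_def by (simp add: sum_distrib_left)
qed

text \<open>Each \<open>j \<times> j\<close> principal minor of \<open>A\<close> with \<open>j < m\<close> is a principal minor of exactly
  \<open>m - j\<close> of the submatrices obtained by deleting one row and column.\<close>

lemma sum_principal_minors_qmat_del:
  "(\<Sum>k<m. \<Sum>T\<in>{T. T \<subseteq> {..<m - 1} \<and> card T = j}. herm_det j (principal_sub (qmat_del k A) T))
     = real (m - j) * (\<Sum>S\<in>{S. S \<subseteq> {..<m} \<and> card S = j}. herm_det j (principal_sub A S))"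
proof -
  have "(\<Sum>T\<in>{T. T \<subseteq> {..<m - 1} \<and> card T = j}. herm_det j (principal_sub (qmat_del k A) T))
      = (\<Sum>S\<in>{S. S \<subseteq> {..<m} - {k} \<and> card S = j}. herm_det j (principal_sub A S))" if k: "k < m" for k
  proof -
    have "herm_det j (principal_sub (qmat_del k A) T) = herm_det j (principal_sub A (skip k ` T))"
      if "T \<subseteq> {..<m - 1}" "card T = j" for T
    proof -
      have "finite T"
        using that(1) finite_subset by blast
      from herm_det_cong[OF principal_sub_qmat_del[OF this]] show ?thesis
        using that(2) by simp
    qed
    then have "(\<Sum>T\<in>{T. T \<subseteq> {..<m - 1} \<and> card T = j}. herm_det j (principal_sub (qmat_del k A) T))
        = (\<Sum>T\<in>{T. T \<subseteq> {..<m - 1} \<and> card T = j}. herm_det j (principal_sub A (skip k ` T)))"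
      by (intro sum.cong refl) auto
    also have "\<dots> = (\<Sum>S\<in>{S. S \<subseteq> {..<m} - {k} \<and> card S = j}. herm_det j (principal_sub A S))"
      by (rule sum_subsets_skip_image[OF k])
    finally show ?thesis .
  qed
  then have "(\<Sum>k<m. \<Sum>T\<in>{T. T \<subseteq> {..<m - 1} \<and> card T = j}. herm_det j (principal_sub (qmat_del k A) T))
      = (\<Sum>k<m. \<Sum>S\<in>{S. S \<subseteq> {..<m} - {k} \<and> card S = j}. herm_det j (principal_sub A S))"
    by (rule sum.cong[OF refl]) simp
  then show ?thesis
    by (simp add: sum_lessThan_subsets_remove)
qed

lemma elem_sym_full_eq_herm_det:
  assumes "herm_eigenvalues m A lam"
  shows "elem_sym lam m m = (\<Sum>S\<in>{S. S \<subseteq> {..<m} \<and> card S = m}. herm_det m (principal_sub A S))"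
proof -
  have "{S. S \<subseteq> {..<m} \<and> card S = m} = {{..<m}}"
    using card_subset_eq[of "{..<m}"] by auto
  then show ?thesis
    using herm_det_cong[OF principal_sub_lessThan] herm_det_eq[OF assms]
    unfolding elem_sym_def by simp
qed

text \<open>Differentiating \<open>\<Prod>\<^sub>i (x - \<lambda>\<^sub>i)\<close> lowers \<open>m\<close> by one, so induction on \<open>m\<close> settles
  every \<open>j < m\<close>; the case \<open>j = m\<close> is the definition of the determinant.\<close>

lemma elem_sym_eq_sum_principal_minors:
  "herm_eigenvalues m A lam \<Longrightarrow> j \<le> m \<Longrightarrow>
   elem_sym lam m j = (\<Sum>S\<in>{S. S \<subseteq> {..<m} \<and> card S = j}. herm_det j (principal_sub A S))"
proof (induction m arbitrary: A lam j)
  case (Suc n)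
  define m where "m = Suc n"
  have ev: "herm_eigenvalues m A lam"
    using Suc.prems m_def by simp
  show ?case
  proof (cases "j = m")
    case True
    then show ?thesis
      using elem_sym_full_eq_herm_det[OF ev] m_def by simp
  next
    case False
    then have j: "j < m"
      using Suc.prems m_def by simp
    have "\<forall>k<m. \<exists>mu. herm_eigenvalues (m - 1) (qmat_del k A) mu"
      using herm_eigenvalues_exists hermitian_qmat_del ev unfolding herm_eigenvalues_def by blast
    then obtain mu where mu: "\<forall>k<m. herm_eigenvalues (m - 1) (qmat_del k A) (mu k)"
      by metis
    have "real (m - j) * elem_sym lam m j = (\<Sum>k<m. elem_sym (mu k) (m - 1) j)"
      by (rule elem_sym_pderiv_identity[OF pderiv_roots_poly_eq_sum[OF ev mu] j])
    also have "\<dots> = (\<Sum>k<m. \<Sum>T\<in>{T. T \<subseteq> {..<m - 1} \<and> card T = j}. herm_det j (principal_sub (qmat_del k A) T))"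
      using Suc.IH mu j unfolding m_def by (intro sum.cong refl) simp
    also have "\<dots> = real (m - j) * (\<Sum>S\<in>{S. S \<subseteq> {..<m} \<and> card S = j}. herm_det j (principal_sub A S))"
      by (rule sum_principal_minors_qmat_del)
    finally show ?thesis
      using j m_def by simp
  qed
qed (use elem_sym_full_eq_herm_det in simp)

theorem lemma3p2:
  fixes m :: nat and A :: qmat and lam :: "nat \<Rightarrow> real"
  assumes "hermitian m A"
    and "herm_eigenvalues m A lam"
  shows "\<forall>j\<in>{1..m}.
           (\<Sum>S\<in>{S. S \<subseteq> {..<m} \<and> card S = j}. \<Prod>i\<in>S. lam i)
         = (\<Sum>S\<in>{S. S \<subseteq> {..<m} \<and> card S = j}. herm_det j (principal_sub A S))"
  using elem_sym_eq_sum_principal_minors[OF assms(2)] unfolding elem_sym_def by auto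

end
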